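(* Let $n\ge 2$ be an integer, let $\rho_{\text{in}}\in\mathbb{C}^{2^n\times 2^n}$ be an $n$-qubit density matrix, and let $\alpha(\rho_{\text{in}})=\text{Tr}[(\sigma_1\otimes I^{\otimes(n-1)})\rho_{\text{in}}]^2+\text{Tr}[(\sigma_3\otimes I^{\otimes(n-1)})\rho_{\text{in}}]^2$. (i) (Tree tensor.) If $n$ is a power of $2$, then the objective function $f_{\text{TT}}$ of the $n$-qubit TT-QNN satisfies $$\frac{1+\log_2 n}{2n}\,\alpha(\rho_{\text{in}})\;\le\;\mathbb{E}_{\boldsymbol{\theta}}\,\|\nabla_{\boldsymbol{\theta}} f_{\text{TT}}\|^2\;\le\;2n-1.$$ (ii) (Step controlled.) For every integer $n_c$ with $1\le n_c\le n-1$, the objective function $f_{\text{SC}}$ of the $n$-qubit SC-QNN with parameter $n_c$ satisfies $$\frac{1+n_c}{2^{1+n_c}}\,\alpha(\rho_{\text{in}})\;\le\;\mathbb{E}_{\boldsymbol{\theta}}\,\|\nabla_{\boldsymbol{\theta}} f_{\text{SC}}\|^2\;\le\;2n-1.$$ In both cases the expectation is over all $2n-1$ circuit parameters drawn independently and uniformly from $[0,2\pi]$, and $\nabla_{\boldsymbol\theta}$ is the gradient with respect to all of them.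
   Context: Pauli matrices: $\sigma_0=I$, $\sigma_1=X=\begin{pmatrix}0&1\\1&0\end{pmatrix}$, $\sigma_2=Y=\begin{pmatrix}0&-i\\i&0\end{pmatrix}$, $\sigma_3=Z=\begin{pmatrix}1&0\\0&-1\end{pmatrix}$. Qubits are numbered $1,\dots,n$. A rotation with parameter $\theta$ on qubit $q$ is the gate $e^{-i\theta\sigma_2}$ acting on qubit $q$ (identity elsewhere). A CNOT with control $c$ and target $t$ is $|0\rangle\langle 0|_c\otimes I_t+|1\rangle\langle1|_c\otimes (\sigma_1)_t$ (identity elsewhere). For a parameterized circuit unitary $V(\boldsymbol\theta)$ the objective is $f(\boldsymbol\theta)=\frac12+\frac12\text{Tr}[(\sigma_3\otimes I^{\otimes(n-1)})V(\boldsymbol\theta)\rho_{\text{in}}V(\boldsymbol\theta)^\dagger]$. TT-QNN ($n=2^m$): $V_{\text{TT}}=V_{m+1}CX_mV_m\cdots CX_1V_1$, where for $\ell=1,\dots,m+1$ the layer $V_\ell$ is the tensor product of independent-parameter rotations $e^{-i\theta_\ell^{(j)}\sigma_2}$ on qubits $(j-1)2^{\ell-1}+1$, $j=1,\dots,n2^{1-\ell}$; and for $\ell=1,\dots,m$ the layer $CX_\ell$ is the product of CNOTs with control qubit $(j-\tfrac12)2^\ell+1$ and target qubit $(j-1)2^\ell+1$, $j=1,\dots,n2^{-\ell}$. It has $2n-1$ parameters; $f_{\text{TT}}$ is $f$ with $V=V_{\text{TT}}$. SC-QNN with parameter $n_c$: $V_{\text{SC}}=V_nCX_{n-1}V_{n-1}\cdots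 CX_1V_1$, where $V_1$ applies an independent-parameter rotation to every qubit; for $2\le\ell\le n-n_c$, $V_\ell$ is a single rotation on qubit $n+1-\ell$; for $n-n_c+1\le \ell\le n$, $V_\ell$ is a single rotation on qubit $1$; for $1\le\ell\le n-1-n_c$, $CX_\ell$ is a CNOT with control qubit $n+1-\ell$ and target qubit $n-\ell$; for $n-n_c\le\ell\le n-1$, $CX_\ell$ is a CNOT with control qubit $n+1-\ell$ and target qubit $1$. Thus $n_c$ is the number of CNOTs targeting qubit 1 directly, and there are $2n-1$ parameters; $f_{\text{SC}}$ is $f$ with $V=V_{\text{SC}}$. *)

theory Defs
  imports "HOL-Probability.Probability"
begin

text \<open>An n-qubit operator is represented as a function nat => nat => complex whose
entries are only ever used for row/column indices below 2^n.  Basis index i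
encodes a computational-basis bit string; qubit q (1 \<le> q \<le> n) is the bit
(i div 2^(n-q)) mod 2, so qubit 1 is the leftmost tensor factor (most significant bit),
matching the convention sigma_3 \<otimes> I^(n-1) for an operator acting on qubit 1.\<close>

type_synonym cmat = "nat \<Rightarrow> nat \<Rightarrow> complex"

definition mmul :: "nat \<Rightarrow> cmat \<Rightarrow> cmat \<Rightarrow> cmat" where
  "mmul N A B = (\<lambda>i j. \<Sum>k<N. A i k * B k j)"

definition mid :: cmat where
  "mid = (\<lambda>i j. if i = j then 1 else 0)"

definition madj :: "cmat \<Rightarrow> cmat" where
  "madj A = (\<lambda>i j. cnj (A j i))"

definition mtrace :: "nat \<Rightarrow> cmat \<Rightarrow> complex" where
  "mtrace N A = (\<Sum>i<N. A i i)"

definition density_matrix :: "nat \<Rightarrow> cmat \<Rightarrow> bool" where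
  "density_matrix n \<rho> \<longleftrightarrow>
     (\<forall>i<2^n. \<forall>j<2^n. \<rho> i j = cnj (\<rho> j i)) \<and>
     (\<forall>v :: nat \<Rightarrow> complex. 0 \<le> Re (\<Sum>i<2^n. \<Sum>j<2^n. cnj (v i) * \<rho> i j * v j)) \<and>
     mtrace (2^n) \<rho> = 1"

definition qbit :: "nat \<Rightarrow> nat \<Rightarrow> nat \<Rightarrow> nat" where
  "qbit n q i = (i div 2^(n - q)) mod 2"

text \<open>Single-qubit 2x2 matrices (indices 0,1) and their lift to qubit q of n qubits,
i.e. I \<otimes> ... \<otimes> G \<otimes> ... \<otimes> I.\<close>
definition lift1 :: "nat \<Rightarrow> nat \<Rightarrow> cmat \<Rightarrow> cmat" where
  "lift1 n q G = (\<lambda>i j. if (\<forall>p\<in>{1..n} - {q}. qbit n p i = qbit n p j)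
                        then G (qbit n q i) (qbit n q j) else 0)"

definition pauliX :: cmat where
  "pauliX = (\<lambda>a b. if a \<noteq> b then 1 else 0)"

definition pauliY :: cmat where
  "pauliY = (\<lambda>a b. if a = 0 \<and> b = 1 then - \<i> else if a = 1 \<and> b = 0 then \<i> else 0)"

definition pauliZ :: cmat where
  "pauliZ = (\<lambda>a b. if a = b then (if a = 0 then 1 else -1) else 0)"

text \<open>The rotation e^{-i theta sigma_2} = cos theta I - i sin theta sigma_2
(exact closed form of the exponential, since sigma_2^2 = I).\<close>
definition rotY :: "real \<Rightarrow> cmat" where
  "rotY \<theta> = (\<lambda>a b. complex_of_real (cos \<theta>) * mid a b - \<i> * complex_of_real (sin \<theta>) * pauliY a b)"

text \<open>CNOT with control c and target t: the permutation matrix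
|0><0|_c \<otimes> I_t + |1><1|_c \<otimes> X_t.\<close>
definition cnot :: "nat \<Rightarrow> nat \<Rightarrow> nat \<Rightarrow> cmat" where
  "cnot n c t = (\<lambda>i j. if (\<forall>p\<in>{1..n} - {t}. qbit n p i = qbit n p j) \<and>
                          qbit n t i = (if qbit n c j = 1 then 1 - qbit n t j else qbit n t j)
                       then 1 else 0)"

datatype gate = Rot nat | CX nat nat

text \<open>Gates are listed in order of application; the k-th rotation gate in the list
(counting from 0) uses parameter theta k.\<close>
fun circ :: "nat \<Rightarrow> gate list \<Rightarrow> (nat \<Rightarrow> real) \<Rightarrow> nat \<Rightarrow> cmat" where
  "circ n [] \<theta> k = mid"
| "circ n (Rot q # gs) \<theta> k = mmul (2^n) (circ n gs \<theta> (Suc k)) (lift1 n q (rotY (\<theta> k)))"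
| "circ n (CX c t # gs) \<theta> k = mmul (2^n) (circ n gs \<theta> k) (cnot n c t)"

definition circuit_unitary :: "nat \<Rightarrow> gate list \<Rightarrow> (nat \<Rightarrow> real) \<Rightarrow> cmat" where
  "circuit_unitary n gs \<theta> = circ n gs \<theta> 0"

text \<open>Objective f(theta) = 1/2 + 1/2 Tr[(sigma_3 \<otimes> I) V rho V^dagger]
(the trace is real; we take its real part).\<close>
definition objective :: "nat \<Rightarrow> gate list \<Rightarrow> cmat \<Rightarrow> (nat \<Rightarrow> real) \<Rightarrow> real" where
  "objective n gs \<rho> \<theta> =
     (let V = circuit_unitary n gs \<theta> in
      1/2 + 1/2 * Re (mtrace (2^n) (mmul (2^n) (lift1 n 1 pauliZ)
                        (mmul (2^n) V (mmul (2^n) \<rho> (madj V))))))"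

definition grad_sq :: "nat \<Rightarrow> ((nat \<Rightarrow> real) \<Rightarrow> real) \<Rightarrow> (nat \<Rightarrow> real) \<Rightarrow> real" where
  "grad_sq P f \<theta> = (\<Sum>k<P. (deriv (\<lambda>t. f (\<theta>(k := t))) (\<theta> k))^2)"

definition expect_params :: "nat \<Rightarrow> ((nat \<Rightarrow> real) \<Rightarrow> real) \<Rightarrow> real" where
  "expect_params P g =
     integral\<^sup>L (PiM {..<P} (\<lambda>_. uniform_measure lborel {0..2*pi})) g"

text \<open>TT-QNN on n = 2^m qubits. Layer l (1..m+1): rotations on qubits j*2^(l-1)+1,
j < n/2^(l-1); for l \<le> m then CNOTs with control j*2^l + 2^(l-1) + 1 and target
j*2^l + 1, j < n/2^l (0-based j).\<close>
definition tt_gates :: "nat \<Rightarrow> gate list" where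
  "tt_gates m = (let n = 2^m in
     concat (map (\<lambda>l. map (\<lambda>j. Rot (j * 2^(l-1) + 1)) [0..<n div 2^(l-1)]
                      @ (if l \<le> m then map (\<lambda>j. CX (j * 2^l + 2^(l-1) + 1) (j * 2^l + 1)) [0..<n div 2^l]
                         else []))
                 [1..<m+2]))"

text \<open>SC-QNN on n qubits with parameter nc: V_1 (rotation on every qubit), then for
l = 1..n-1 the layer CX_l followed by V_(l+1).\<close>
definition sc_gates :: "nat \<Rightarrow> nat \<Rightarrow> gate list" where
  "sc_gates n nc =
     map (\<lambda>q. Rot q) [1..<n+1] @
     concat (map (\<lambda>l. [CX (n + 1 - l) (if l \<le> n - 1 - nc then n - l else 1),
                       Rot (if l + 1 \<le> n - nc then n - l else 1)])
                 [1..<n])"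

definition f_TT :: "nat \<Rightarrow> cmat \<Rightarrow> (nat \<Rightarrow> real) \<Rightarrow> real" where
  "f_TT m \<rho> = objective (2^m) (tt_gates m) \<rho>"

definition f_SC :: "nat \<Rightarrow> nat \<Rightarrow> cmat \<Rightarrow> (nat \<Rightarrow> real) \<Rightarrow> real" where
  "f_SC n nc \<rho> = objective n (sc_gates n nc) \<rho>"

definition alpha :: "nat \<Rightarrow> cmat \<Rightarrow> real" where
  "alpha n \<rho> = (Re (mtrace (2^n) (mmul (2^n) (lift1 n 1 pauliX) \<rho>)))^2
              + (Re (mtrace (2^n) (mmul (2^n) (lift1 n 1 pauliZ) \<rho>)))^2"

end

theory Submission
  imports Defs
begin

(* Conjugation by a rotation e^{-i t sigma_2} is a trigonometric polynomial of degree one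
   in 2t:  R(t)^dag A R(t) = A_0 + cos(2t) A_1 + sin(2t) A_2.  Moving sigma_3 on qubit 1 backwards through
   the circuit therefore writes 2 f - 1 as a sum over paths s in {0,1,2}^P of coefficients tau_s times
   b_{s_1}(theta_1) ... b_{s_P}(theta_P), where b_0 = 1, b_1 = cos 2t, b_2 = sin 2t.  For the uniform
   distribution these products are orthogonal, with squared norms 1 and 1/2, and d/dt exchanges b_1 and b_2
   up to a factor 2; hence
     E (d_k f)^2 = sum_s (tau_s / 2)^2 d(s_k) prod_{j ~= k} c(s_j),   E (2 f - 1)^2 = sum_s tau_s^2 prod_j c(s_j),
   with c = (1, 1/2, 1/2) and d = (0, 2, 2).  As d <= 4 c, every partial derivative has mean square at most
   E (2 f - 1)^2 <= 1, and summing over the P = 2n - 1 parameters gives the upper bound.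
   For the lower bound two paths suffice: both branch exactly at the L rotations acting on qubit 1, one ends
   in +-sigma_1 and the other in +-sigma_3 on qubit 1, so tau_s^2 is Tr[sigma_1 rho]^2 resp. Tr[sigma_3 rho]^2,
   and each of them contributes tau_s^2 / 2^L for each of these L parameters.  The tree tensor network has
   L = 1 + log2 n and the step controlled one L = 1 + n_c. *)

lemma mmul_assoc: "mmul N (mmul N A B) C = mmul N A (mmul N B C)"
  unfolding mmul_def
  by (auto simp: sum_distrib_left sum_distrib_right mult.assoc intro!: ext sum.swap[THEN trans])

lemma madj_mmul: "madj (mmul N A B) = mmul N (madj B) (madj A)"
  unfolding mmul_def madj_def by (auto simp: mult.commute intro!: ext)

lemma madj_mid: "madj mid = mid"
  unfolding madj_def mid_def by (auto intro!: ext)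

lemma mtrace_mmul_commute: "mtrace N (mmul N A B) = mtrace N (mmul N B A)"
  unfolding mtrace_def mmul_def by (subst sum.swap) (simp add: mult.commute)

lemma mmul_entry_cong:
  assumes "\<And>l. l < N \<Longrightarrow> A i l = A' i l" "\<And>l. l < N \<Longrightarrow> B l j = B' l j"
  shows "mmul N A B i j = mmul N A' B' i j"
  unfolding mmul_def using assms by (auto intro!: sum.cong)

lemma mmul_conj_entry_cong:
  assumes "\<And>l l'. l < N \<Longrightarrow> l' < N \<Longrightarrow> H l l' = H' l l'" "j < N"
  shows "mmul N P (mmul N H Q) i j = mmul N P (mmul N H' Q) i j"
proof (rule mmul_entry_cong)
  fix l assume "l < N"
  show "mmul N H Q l j = mmul N H' Q l j" by (rule mmul_entry_cong) (use assms \<open>l < N\<close> in auto)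
qed simp

lemma mmul_mid_left: assumes "i < N" shows "mmul N mid A i j = A i j"
proof -
  have "(\<Sum>k<N. mid i k * A k j) = (\<Sum>k<N. if i = k then A k j else 0)"
    by (rule sum.cong) (auto simp: mid_def)
  then show ?thesis unfolding mmul_def using assms by (simp add: sum.delta')
qed

lemma mmul_mid_right: assumes "j < N" shows "mmul N A mid i j = A i j"
proof -
  have "(\<Sum>k<N. A i k * mid k j) = (\<Sum>k<N. if k = j then A i k else 0)"
    by (rule sum.cong) (auto simp: mid_def)
  then show ?thesis unfolding mmul_def using assms by (simp add: sum.delta)
qed

lemma mmul_lincomb_left:
  "mmul N (\<lambda>i j. x * A i j + y * B i j) C = (\<lambda>i j. x * mmul N A C i j + y * mmul N B C i j)"
  unfolding mmul_def by (auto simp: algebra_simps sum.distrib sum_distrib_left intro!: ext)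

lemma mmul_lincomb_right:
  "mmul N C (\<lambda>i j. x * A i j + y * B i j) = (\<lambda>i j. x * mmul N C A i j + y * mmul N C B i j)"
  unfolding mmul_def by (auto simp: algebra_simps sum.distrib sum_distrib_left intro!: ext)

lemma mmul_scale_left: "mmul N (\<lambda>i j. x * A i j) C = (\<lambda>i j. x * mmul N A C i j)"
  unfolding mmul_def by (auto simp: algebra_simps sum_distrib_left intro!: ext)

lemma mmul_scale_right: "mmul N C (\<lambda>i j. x * A i j) = (\<lambda>i j. x * mmul N C A i j)"
  unfolding mmul_def by (auto simp: algebra_simps sum_distrib_left intro!: ext)

lemma mmul_sum_left: "mmul N (\<lambda>i j. \<Sum>s\<in>S. f s i j) C = (\<lambda>i j. \<Sum>s\<in>S. mmul N (f s) C i j)"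
  unfolding mmul_def by (auto simp: sum_distrib_right intro!: ext sum.swap[THEN trans])

lemma mmul_sum_right: "mmul N C (\<lambda>i j. \<Sum>s\<in>S. f s i j) = (\<lambda>i j. \<Sum>s\<in>S. mmul N C (f s) i j)"
  unfolding mmul_def by (auto simp: sum_distrib_left intro!: ext sum.swap[THEN trans])

lemma mmul_conj_sum:
  "mmul N P (mmul N (\<lambda>i j. \<Sum>s\<in>S. x s * Y s i j) Q) = (\<lambda>i j. \<Sum>s\<in>S. x s * mmul N P (mmul N (Y s) Q) i j)"
  by (simp add: mmul_sum_left mmul_sum_right mmul_scale_left mmul_scale_right)

lemma mtrace_conj:
  "mtrace N (mmul N Z (mmul N V (mmul N \<rho> (madj V)))) = mtrace N (mmul N (mmul N (madj V) (mmul N Z V)) \<rho>)"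
proof -
  have "mmul N Z (mmul N V (mmul N \<rho> (madj V))) = mmul N (mmul N (mmul N Z V) \<rho>) (madj V)"
    by (simp add: mmul_assoc)
  then have "mtrace N (mmul N Z (mmul N V (mmul N \<rho> (madj V))))
           = mtrace N (mmul N (madj V) (mmul N (mmul N Z V) \<rho>))"
    by (simp add: mtrace_mmul_commute)
  then show ?thesis by (simp add: mmul_assoc)
qed

lemma less_2_cases: "(a::nat) < 2 \<Longrightarrow> a = 0 \<or> a = 1" by auto

lemma less_3_cases: "(a::nat) < 3 \<Longrightarrow> a = 0 \<or> a = 1 \<or> a = 2" by auto

lemma sum_lessThan_2: "(\<Sum>k<2. f k) = f 0 + f (1::nat)"
  by (simp add: numeral_2_eq_2)

lemma qbit_bit: "qbit n q i = (if bit i (n - q) then 1 else 0)"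
  unfolding qbit_def by (simp add: bit_iff_odd odd_iff_mod_2_eq_one)

lemma qbit_less_2: "qbit n q i < 2"
  unfolding qbit_def by simp

lemma not_bit_if_less_exp: "(i::nat) < 2^n \<Longrightarrow> n \<le> k \<Longrightarrow> \<not> bit i k"
  by (metis bit_take_bit_iff take_bit_nat_eq_self_iff not_le)

lemma less_exp_iff_not_bit: "(i::nat) < 2^n \<longleftrightarrow> (\<forall>k\<ge>n. \<not> bit i k)"
  by (metis not_bit_if_less_exp bit_take_bit_iff bit_eq_iff take_bit_nat_less_exp not_le)

lemma qbit_eq_imp_eq:
  assumes "i < 2^n" "j < 2^n" "\<forall>p\<in>{1..n}. qbit n p i = qbit n p j"
  shows "i = j"
proof -
  have "bit i k = bit j k" for k
  proof (cases "k < n")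
    case True
    then have "qbit n (n - k) i = qbit n (n - k) j" using assms(3) by auto
    moreover have "n - (n - k) = k" using True by simp
    ultimately show ?thesis by (simp add: qbit_bit split: if_splits)
  next
    case False
    then show ?thesis using not_bit_if_less_exp assms(1,2) by simp
  qed
  then show ?thesis by (simp add: bit_eq_iff)
qed

definition set_qbit :: "nat \<Rightarrow> nat \<Rightarrow> nat \<Rightarrow> nat \<Rightarrow> nat" where
  "set_qbit n q i b = (if b = 0 then unset_bit (n - q) i else set_bit (n - q) i)"

lemma set_qbit_less: "q \<in> {1..n} \<Longrightarrow> i < 2^n \<Longrightarrow> set_qbit n q i b < 2^n"
  unfolding set_qbit_def less_exp_iff_not_bit
  by (auto simp: bit_set_bit_iff bit_unset_bit_iff)

lemma qbit_set_qbit: "q \<in> {1..n} \<Longrightarrow> p \<in> {1..n} \<Longrightarrow> b < 2 \<Longrightarrow>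
   qbit n p (set_qbit n q i b) = (if p = q then b else qbit n p i)"
  unfolding set_qbit_def qbit_bit
  by (auto simp: bit_set_bit_iff bit_unset_bit_iff)

lemma sum_qbit_fiber:
  fixes g :: "nat \<Rightarrow> 'a::comm_monoid_add"
  assumes q: "q \<in> {1..n}" and i: "i < 2^n"
  shows "(\<Sum>l<2^n. if (\<forall>p\<in>{1..n} - {q}. qbit n p i = qbit n p l) then g l else 0)
         = g (set_qbit n q i 0) + g (set_qbit n q i 1)"
proof -
  let ?S = "{l. l < 2^n \<and> (\<forall>p\<in>{1..n} - {q}. qbit n p i = qbit n p l)}"
  have S: "?S = {set_qbit n q i 0, set_qbit n q i 1}"
  proof (intro equalityI subsetI)
    fix l assume l: "l \<in> ?S"
    have "set_qbit n q i (qbit n q l) = l"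
      by (rule qbit_eq_imp_eq[OF set_qbit_less[OF q i]]) (use l q in \<open>auto simp: qbit_set_qbit qbit_less_2\<close>)
    then show "l \<in> {set_qbit n q i 0, set_qbit n q i 1}"
      using less_2_cases[OF qbit_less_2, of n q l] by auto
  next
    fix l assume "l \<in> {set_qbit n q i 0, set_qbit n q i 1}"
    then show "l \<in> ?S" using q i by (auto simp: set_qbit_less qbit_set_qbit split: if_splits)
  qed
  have ne: "set_qbit n q i 0 \<noteq> set_qbit n q i 1"
    using qbit_set_qbit[OF q q, of 0 i] qbit_set_qbit[OF q q, of 1 i] by auto
  have "(\<Sum>l<2^n. if (\<forall>p\<in>{1..n} - {q}. qbit n p i = qbit n p l) then g l else 0) = sum g ?S"
    by (simp add: sum.inter_restrict lessThan_def Collect_conj_eq)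
  also have "\<dots> = g (set_qbit n q i 0) + g (set_qbit n q i 1)" using S ne by simp
  finally show ?thesis .
qed


lemma lift1_lincomb:
  "lift1 n q (\<lambda>a b. x * A a b + y * B a b) = (\<lambda>i j. x * lift1 n q A i j + y * lift1 n q B i j)"
  unfolding lift1_def by (auto intro!: ext)

lemma lift1_scale: "lift1 n q (\<lambda>a b. x * A a b) = (\<lambda>i j. x * lift1 n q A i j)"
  unfolding lift1_def by (auto intro!: ext)

lemma lift1_cong: "(\<And>a b. a < 2 \<Longrightarrow> b < 2 \<Longrightarrow> A a b = B a b) \<Longrightarrow> lift1 n q A = lift1 n q B"
  unfolding lift1_def by (auto intro!: ext simp: qbit_less_2)

lemma madj_lift1: "madj (lift1 n q A) = lift1 n q (madj A)"
  unfolding lift1_def madj_def by (auto intro!: ext)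

lemma qbit_agree_set_qbit_iff:
  assumes p: "p \<in> {1..n}" and q: "q \<in> {1..n}" and pq: "p \<noteq> q" and b: "b < 2"
  shows "(\<forall>r\<in>{1..n}-{q}. qbit n r (set_qbit n p i b) = qbit n r j) \<longleftrightarrow>
         (b = qbit n p j \<and> (\<forall>r\<in>{1..n}-{p,q}. qbit n r i = qbit n r j))"
  using qbit_set_qbit[OF p _ b, of _ i] p pq by (auto split: if_splits)

lemma mmul_lift1_entry:
  assumes p: "p \<in> {1..n}" and i: "i < 2^n"
  shows "mmul (2^n) (lift1 n p A) Y i j =
           A (qbit n p i) 0 * Y (set_qbit n p i 0) j + A (qbit n p i) 1 * Y (set_qbit n p i 1) j"
proof -
  have "mmul (2^n) (lift1 n p A) Y i j =
     (\<Sum>l<2^n. if (\<forall>r\<in>{1..n}-{p}. qbit n r i = qbit n r l) then A (qbit n p i) (qbit n p l) * Y l j else 0)"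
    unfolding mmul_def by (rule sum.cong) (auto simp: lift1_def)
  also have "\<dots> = A (qbit n p i) (qbit n p (set_qbit n p i 0)) * Y (set_qbit n p i 0) j
                 + A (qbit n p i) (qbit n p (set_qbit n p i 1)) * Y (set_qbit n p i 1) j"
    by (rule sum_qbit_fiber[OF p i])
  finally show ?thesis using p by (simp add: qbit_set_qbit)
qed

lemma mmul_lift1_same:
  assumes q: "q \<in> {1..n}" and i: "i < 2^n"
  shows "mmul (2^n) (lift1 n q A) (lift1 n q B) i j = lift1 n q (mmul 2 A B) i j"
  using q unfolding mmul_lift1_entry[OF q i]
  by (simp add: lift1_def qbit_set_qbit mmul_def sum_lessThan_2)

lemma mmul_lift1_distinct_entry:
  assumes p: "p \<in> {1..n}" and q: "q \<in> {1..n}" and pq: "p \<noteq> q" and i: "i < 2^n"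
  shows "mmul (2^n) (lift1 n p A) (lift1 n q B) i j =
    (if (\<forall>r\<in>{1..n}-{p,q}. qbit n r i = qbit n r j) then A (qbit n p i) (qbit n p j) * B (qbit n q i) (qbit n q j) else 0)"
proof -
  have qq: "qbit n q (set_qbit n p i b) = qbit n q i" if "b < 2" for b
    using qbit_set_qbit[OF p q that] pq by simp
  have L: "lift1 n q B (set_qbit n p i b) j = (if b = qbit n p j \<and> (\<forall>r\<in>{1..n}-{p,q}. qbit n r i = qbit n r j)
            then B (qbit n q i) (qbit n q j) else 0)" if "b < 2" for b
    unfolding lift1_def qbit_agree_set_qbit_iff[OF p q pq that] qq[OF that] ..
  from less_2_cases[OF qbit_less_2, of n p j] show ?thesis
    unfolding mmul_lift1_entry[OF p i] by (elim disjE) (simp_all add: L)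
qed

lemma mmul_lift1_commute:
  assumes p: "p \<in> {1..n}" and q: "q \<in> {1..n}" and pq: "p \<noteq> q" and i: "i < 2^n"
  shows "mmul (2^n) (lift1 n p A) (lift1 n q B) i j = mmul (2^n) (lift1 n q B) (lift1 n p A) i j"
  using mmul_lift1_distinct_entry[OF p q pq i, of A B] mmul_lift1_distinct_entry[OF q p pq[symmetric] i, of B A]
  by (simp add: insert_commute mult.commute)

lemma lift1_diagonal:
  assumes q: "q \<in> {1..n}" and i: "i < 2^n" and j: "j < 2^n" and D: "\<And>a b. a \<noteq> b \<Longrightarrow> D a b = 0"
  shows "lift1 n q D i j = (if i = j then D (qbit n q i) (qbit n q i) else 0)"
proof (cases "i = j")
  case True then show ?thesis by (simp add: lift1_def)
next
  case False
  then have "qbit n q i \<noteq> qbit n q j" if "\<forall>p\<in>{1..n} - {q}. qbit n p i = qbit n p j"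
    using that qbit_eq_imp_eq[OF i j] by (metis Diff_iff singletonD)
  then show ?thesis using False D by (auto simp: lift1_def)
qed

lemma lift1_mid_entry:
  assumes q: "q \<in> {1..n}" and i: "i < 2^n" and j: "j < 2^n"
  shows "lift1 n q mid i j = mid i j"
  using lift1_diagonal[OF q i j, of mid] by (simp add: mid_def)

lemma mmul_lift1_mid_left:
  assumes q: "q \<in> {1..n}" and i: "i < 2^n"
  shows "mmul (2^n) (lift1 n q mid) Y i j = Y i j"
proof -
  have "mmul (2^n) (lift1 n q mid) Y i j = mmul (2^n) mid Y i j"
    by (rule mmul_entry_cong) (use lift1_mid_entry[OF q i] in auto)
  then show ?thesis using mmul_mid_left[OF i] by simp
qed

lemma mmul_lift1_mid_right:
  assumes q: "q \<in> {1..n}" and j: "j < 2^n"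
  shows "mmul (2^n) Y (lift1 n q mid) i j = Y i j"
proof -
  have "mmul (2^n) Y (lift1 n q mid) i j = mmul (2^n) Y mid i j"
    by (rule mmul_entry_cong) (use lift1_mid_entry[OF q _ j] in auto)
  then show ?thesis using mmul_mid_right[OF j] by simp
qed

lemma lift1_unitary:
  assumes q: "q \<in> {1..n}" and i: "i < 2^n" and j: "j < 2^n"
    and U: "\<And>a b. a < 2 \<Longrightarrow> b < 2 \<Longrightarrow> mmul 2 (madj U) U a b = mid a b"
  shows "mmul (2^n) (madj (lift1 n q U)) (lift1 n q U) i j = mid i j"
proof -
  have "mmul (2^n) (madj (lift1 n q U)) (lift1 n q U) i j = lift1 n q (mmul 2 (madj U) U) i j"
    unfolding madj_lift1 by (rule mmul_lift1_same[OF q i])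
  also have "\<dots> = lift1 n q mid i j" by (subst lift1_cong[where B = mid]) (use U in auto)
  also have "\<dots> = mid i j" by (rule lift1_mid_entry[OF q i j])
  finally show ?thesis .
qed

definition cnot_perm :: "nat \<Rightarrow> nat \<Rightarrow> nat \<Rightarrow> nat \<Rightarrow> nat" where
  "cnot_perm n c t j = (if qbit n c j = 1 then set_qbit n t j (1 - qbit n t j) else j)"

lemma cnot_perm_less: "t \<in> {1..n} \<Longrightarrow> j < 2^n \<Longrightarrow> cnot_perm n c t j < 2^n"
  unfolding cnot_perm_def by (simp add: set_qbit_less)

lemma qbit_cnot_perm:
  assumes "t \<in> {1..n}" "p \<in> {1..n}"
  shows "qbit n p (cnot_perm n c t j) = (if p = t \<and> qbit n c j = 1 then 1 - qbit n t j else qbit n p j)"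
  using assms unfolding cnot_perm_def by (auto simp: qbit_set_qbit)

lemma cnot_entry:
  assumes t: "t \<in> {1..n}" and l: "l < 2^n" and j: "j < 2^n"
  shows "cnot n c t l j = (if l = cnot_perm n c t j then 1 else 0)"
proof -
  have "(\<forall>p\<in>{1..n} - {t}. qbit n p l = qbit n p j) \<and>
           qbit n t l = (if qbit n c j = 1 then 1 - qbit n t j else qbit n t j)
        \<longleftrightarrow> (\<forall>p\<in>{1..n}. qbit n p l = qbit n p (cnot_perm n c t j))"
    using qbit_cnot_perm[OF t] t by auto
  also have "\<dots> \<longleftrightarrow> l = cnot_perm n c t j"
    using qbit_eq_imp_eq[OF l cnot_perm_less[OF t j]] by auto
  finally show ?thesis unfolding cnot_def by simp
qed

lemma cnot_perm_involution:
  assumes c: "c \<in> {1..n}" and t: "t \<in> {1..n}" and ct: "c \<noteq> t" and j: "j < 2^n"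
  shows "cnot_perm n c t (cnot_perm n c t j) = j"
proof (rule qbit_eq_imp_eq[OF cnot_perm_less[OF t cnot_perm_less[OF t j]] j], intro ballI)
  fix p assume p: "p \<in> {1..n}"
  have "qbit n c (cnot_perm n c t j) = qbit n c j" using qbit_cnot_perm[OF t c] ct by simp
  then show "qbit n p (cnot_perm n c t (cnot_perm n c t j)) = qbit n p j"
    using qbit_cnot_perm[OF t p, of c "cnot_perm n c t j"] qbit_cnot_perm[OF t p, of c j]
      qbit_cnot_perm[OF t t, of c j] qbit_less_2[of n t j]
    by auto
qed

lemma mmul_cnot_right:
  assumes t: "t \<in> {1..n}" and j: "j < 2^n"
  shows "mmul (2^n) X (cnot n c t) l j = X l (cnot_perm n c t j)"
proof -
  have "mmul (2^n) X (cnot n c t) l j = (\<Sum>l'<2^n. if l' = cnot_perm n c t j then X l l' else 0)"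
    unfolding mmul_def by (rule sum.cong) (auto simp: cnot_entry[OF t _ j])
  then show ?thesis using cnot_perm_less[OF t j] by simp
qed

lemma mmul_madj_cnot_left:
  assumes t: "t \<in> {1..n}" and i: "i < 2^n"
  shows "mmul (2^n) (madj (cnot n c t)) Y i j = Y (cnot_perm n c t i) j"
proof -
  have "mmul (2^n) (madj (cnot n c t)) Y i j = (\<Sum>l<2^n. if l = cnot_perm n c t i then Y l j else 0)"
    unfolding mmul_def by (rule sum.cong) (auto simp: madj_def cnot_entry[OF t _ i])
  then show ?thesis using cnot_perm_less[OF t i] by simp
qed

lemma cnot_conj_entry:
  assumes t: "t \<in> {1..n}" and i: "i < 2^n" and j: "j < 2^n"
  shows "mmul (2^n) (madj (cnot n c t)) (mmul (2^n) X (cnot n c t)) i j = X (cnot_perm n c t i) (cnot_perm n c t j)"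
  by (subst mmul_madj_cnot_left[OF t i]) (rule mmul_cnot_right[OF t j])

lemma cnot_unitary:
  assumes c: "c \<in> {1..n}" and t: "t \<in> {1..n}" and ct: "c \<noteq> t" and i: "i < 2^n" and j: "j < 2^n"
  shows "mmul (2^n) (madj (cnot n c t)) (cnot n c t) i j = mid i j"
proof -
  have "cnot_perm n c t i = cnot_perm n c t j \<longleftrightarrow> i = j"
    by (metis cnot_perm_involution[OF c t ct i] cnot_perm_involution[OF c t ct j])
  then show ?thesis
    unfolding mmul_madj_cnot_left[OF t i] cnot_entry[OF t cnot_perm_less[OF t i] j] by (simp add: mid_def)
qed

lemma cnot_perm_agree_off_1_iff:
  assumes c: "c \<in> {1..n}" and t: "t \<in> {1..n}" and ct: "c \<noteq> t" and c1: "c \<noteq> 1"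
  shows "(\<forall>p\<in>{1..n} - {1}. qbit n p (cnot_perm n c t i) = qbit n p (cnot_perm n c t j)) \<longleftrightarrow>
         (\<forall>p\<in>{1..n} - {1}. qbit n p i = qbit n p j)"
proof -
  have control: "qbit n c (cnot_perm n c t k) = qbit n c k" for k
    using qbit_cnot_perm[OF t c] ct by auto
  have "qbit n p (cnot_perm n c t i) = qbit n p (cnot_perm n c t j) \<longleftrightarrow> qbit n p i = qbit n p j"
    if p: "p \<in> {1..n}" and cc: "qbit n c i = qbit n c j" for p
    using qbit_cnot_perm[OF t p, of c i] qbit_cnot_perm[OF t p, of c j] cc
      qbit_less_2[of n t i] qbit_less_2[of n t j] by auto
  moreover have "qbit n c i = qbit n c j"
    if "\<forall>p\<in>{1..n} - {1}. qbit n p (cnot_perm n c t i) = qbit n p (cnot_perm n c t j)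
        \<or> (\<forall>p\<in>{1..n} - {1}. qbit n p i = qbit n p j)"
    using that c c1 control by (metis Diff_iff singletonD)
  ultimately show ?thesis by (metis DiffD1)
qed

lemma lift1_qubit1_cnot_perm:
  assumes c: "c \<in> {1..n}" and t: "t \<in> {1..n}" and ct: "c \<noteq> t" and c1: "c \<noteq> 1" and n1: "1 \<le> n"
    and A: "t = 1 \<Longrightarrow> (\<forall>a<2. \<forall>b<2. A (1 - a) (1 - b) = A a b)"
  shows "lift1 n 1 A (cnot_perm n c t i) (cnot_perm n c t j) = lift1 n 1 A i j"
proof (cases "\<forall>p\<in>{1..n} - {1}. qbit n p i = qbit n p j")
  case False
  have "lift1 n 1 A x y = (if \<forall>p\<in>{1..n} - {1}. qbit n p x = qbit n p y then A (qbit n 1 x) (qbit n 1 y) else 0)"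
    for x y by (simp add: lift1_def)
  then show ?thesis by (simp only: cnot_perm_agree_off_1_iff[OF c t ct c1] if_not_P[OF False])
next
  case True
  have one: "1 \<in> {1..n}" using n1 by simp
  have "qbit n c i = qbit n c j" using True c c1 by force
  then have "A (qbit n 1 (cnot_perm n c t i)) (qbit n 1 (cnot_perm n c t j)) = A (qbit n 1 i) (qbit n 1 j)"
    using A qbit_cnot_perm[OF t one, of c i] qbit_cnot_perm[OF t one, of c j]
      qbit_less_2[of n 1 i] qbit_less_2[of n 1 j] by auto
  then show ?thesis using True unfolding lift1_def cnot_perm_agree_off_1_iff[OF c t ct c1] by simp
qed

definition rotJ :: cmat where
  "rotJ = (\<lambda>a b. if a = 0 \<and> b = 1 then -1 else if a = 1 \<and> b = 0 then 1 else 0)"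

lemma rotY_eq: "rotY \<theta> = (\<lambda>a b. complex_of_real (cos \<theta>) * mid a b + complex_of_real (sin \<theta>) * rotJ a b)"
proof -
  have "\<i> * x * \<i> = - x" for x :: complex
    by (metis complex_i_mult_minus mult.commute mult.assoc)
  then show ?thesis unfolding rotY_def rotJ_def pauliY_def by (auto intro!: ext)
qed

lemma rotJ_unitary: "a < 2 \<Longrightarrow> b < 2 \<Longrightarrow> mmul 2 (madj rotJ) rotJ a b = mid a b"
  by (auto dest!: less_2_cases simp: mmul_def sum_lessThan_2 madj_def rotJ_def mid_def)

lemma rotY_unitary:
  assumes "a < 2" "b < 2"
  shows "mmul 2 (madj (rotY t)) (rotY t) a b = mid a b"
proof -
  have "complex_of_real (cos t) * complex_of_real (cos t) + complex_of_real (sin t) * complex_of_real (sin t) = 1"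
    by (metis of_real_add of_real_mult of_real_1 sin_cos_squared_add3 add.commute)
  then show ?thesis
    using assms by (auto dest!: less_2_cases simp: mmul_def sum_lessThan_2 madj_def rotY_eq rotJ_def mid_def algebra_simps)
qed

definition trig_basis :: "nat \<Rightarrow> real \<Rightarrow> real" where
  "trig_basis a t = (if a = 0 then 1 else if a = 1 then cos (2 * t) else sin (2 * t))"

(* The Fourier components in 2t of t |-> R(t)^dag X R(t), for R(t) = cos t I + sin t J acting on qubit q. *)
definition rot_component :: "nat \<Rightarrow> nat \<Rightarrow> nat \<Rightarrow> cmat \<Rightarrow> cmat" where
  "rot_component n q a X = (let J = lift1 n q rotJ; K = lift1 n q (madj rotJ) in
     if a = 0 then (\<lambda>i j. (X i j + mmul (2^n) K (mmul (2^n) X J) i j) / 2)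
     else if a = 1 then (\<lambda>i j. (X i j - mmul (2^n) K (mmul (2^n) X J) i j) / 2)
     else (\<lambda>i j. (mmul (2^n) X J i j + mmul (2^n) K X i j) / 2))"

lemma cos_sin_conj_identity:
  fixes x y u v :: complex
  shows "complex_of_real (cos t) * (complex_of_real (cos t) * x + complex_of_real (sin t) * u)
       + complex_of_real (sin t) * (complex_of_real (cos t) * v + complex_of_real (sin t) * y)
       = (x + y) / 2 + complex_of_real (cos (2 * t)) * ((x - y) / 2) + complex_of_real (sin (2 * t)) * ((u + v) / 2)"
proof -
  define c where "c = complex_of_real (cos t)"
  define s where "s = complex_of_real (sin t)"
  have "c * c + s * s = 1" unfolding c_def s_def
    by (metis of_real_add of_real_mult of_real_1 sin_cos_squared_add3 add.commute)
  moreover have "complex_of_real (cos (2 * t)) = c * c - s * s" unfolding c_def s_def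
    by (simp add: cos_double power2_eq_square)
  moreover have "complex_of_real (sin (2 * t)) = 2 * s * c" unfolding c_def s_def
    by (simp add: sin_double)
  moreover have "c * (c * x + s * u) + s * (c * v + s * y)
      = (x + y) / 2 * (c * c + s * s) + (c * c - s * s) * ((x - y) / 2) + (2 * s * c) * ((u + v) / 2)"
    by (simp add: field_simps)
  ultimately show ?thesis unfolding c_def s_def by simp
qed

lemma conj_lift1_rotY:
  assumes q: "q \<in> {1..n}" and i: "i < 2^n" and j: "j < 2^n"
  shows "mmul (2^n) (madj (lift1 n q (rotY t))) (mmul (2^n) X (lift1 n q (rotY t))) i j
       = (\<Sum>a<3. complex_of_real (trig_basis a t) * rot_component n q a X i j)"
proof -
  define N where "N = (2::nat)^n"
  define c where "c = complex_of_real (cos t)"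
  define s where "s = complex_of_real (sin t)"
  define I where "I = lift1 n q mid"
  define J where "J = lift1 n q rotJ"
  define K where "K = lift1 n q (madj rotJ)"
  have R: "lift1 n q (rotY t) = (\<lambda>i j. c * I i j + s * J i j)"
    unfolding c_def s_def I_def J_def rotY_eq by (rule lift1_lincomb)
  have RA: "madj (lift1 n q (rotY t)) = (\<lambda>i j. c * I i j + s * K i j)"
  proof -
    have "madj (rotY t) = (\<lambda>a b. c * mid a b + s * madj rotJ a b)"
      unfolding c_def s_def rotY_eq madj_def mid_def by (auto intro!: ext)
    then show ?thesis unfolding madj_lift1 I_def K_def by (simp add: lift1_lincomb)
  qed
  have e1: "mmul N I (mmul N X I) i j = X i j"
    unfolding N_def I_def using mmul_lift1_mid_left[OF q i] mmul_lift1_mid_right[OF q j] by simp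
  have e2: "mmul N I (mmul N X J) i j = mmul N X J i j"
    unfolding N_def I_def using mmul_lift1_mid_left[OF q i] by simp
  have e3: "mmul N K (mmul N X I) i j = mmul N K X i j"
    unfolding N_def I_def by (rule mmul_entry_cong) (use mmul_lift1_mid_right[OF q j] in auto)
  have "mmul N (madj (lift1 n q (rotY t))) (mmul N X (lift1 n q (rotY t))) i j
     = c * (c * X i j + s * mmul N X J i j) + s * (c * mmul N K X i j + s * mmul N K (mmul N X J) i j)"
    unfolding RA unfolding R mmul_lincomb_left mmul_lincomb_right using e1 e2 e3 by simp
  also have "\<dots> = (X i j + mmul N K (mmul N X J) i j) / 2
     + complex_of_real (cos (2 * t)) * ((X i j - mmul N K (mmul N X J) i j) / 2)
     + complex_of_real (sin (2 * t)) * ((mmul N X J i j + mmul N K X i j) / 2)"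
    unfolding c_def s_def by (rule cos_sin_conj_identity)
  also have "\<dots> = (\<Sum>a<3. complex_of_real (trig_basis a t) * rot_component n q a X i j)"
    by (simp add: numeral_3_eq_3 lessThan_Suc trig_basis_def rot_component_def Let_def N_def J_def K_def)
  finally show ?thesis unfolding N_def .
qed

lemma rot_component_cong:
  assumes X: "\<And>i j. i < 2^n \<Longrightarrow> j < 2^n \<Longrightarrow> X i j = Y i j" and i: "i < 2^n" and j: "j < 2^n"
  shows "rot_component n q a X i j = rot_component n q a Y i j"
proof -
  have m1: "mmul (2^n) X B l j = mmul (2^n) Y B l j" if "l < 2^n" for B l
    by (rule mmul_entry_cong) (use X that in auto)
  have m2: "mmul (2^n) A (mmul (2^n) X B) i j = mmul (2^n) A (mmul (2^n) Y B) i j" for A B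
    by (rule mmul_entry_cong) (use m1 in auto)
  have m3: "mmul (2^n) A X i j = mmul (2^n) A Y i j" for A
    by (rule mmul_entry_cong) (use X j in auto)
  show ?thesis unfolding rot_component_def Let_def using X[OF i j] m1[OF i] m2 m3 by simp
qed

lemma rot_component_scale: "rot_component n q a (\<lambda>i j. x * X i j) = (\<lambda>i j. x * rot_component n q a X i j)"
  unfolding rot_component_def Let_def mmul_scale_left mmul_scale_right by (auto intro!: ext simp: field_simps)

definition rot_component1 :: "nat \<Rightarrow> cmat \<Rightarrow> cmat" where
  "rot_component1 a A = (if a = 0 then (\<lambda>x y. (A x y + mmul 2 (madj rotJ) (mmul 2 A rotJ) x y) / 2)
     else if a = 1 then (\<lambda>x y. (A x y - mmul 2 (madj rotJ) (mmul 2 A rotJ) x y) / 2)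
     else (\<lambda>x y. (mmul 2 A rotJ x y + mmul 2 (madj rotJ) A x y) / 2))"

lemma rot_component_lift1_same:
  assumes q: "q \<in> {1..n}" and i: "i < 2^n"
  shows "rot_component n q a (lift1 n q A) i j = lift1 n q (rot_component1 a A) i j"
proof -
  have "mmul (2^n) (lift1 n q (madj rotJ)) (mmul (2^n) (lift1 n q A) (lift1 n q rotJ)) i j
       = mmul (2^n) (lift1 n q (madj rotJ)) (lift1 n q (mmul 2 A rotJ)) i j"
    by (rule mmul_entry_cong) (use mmul_lift1_same[OF q] in auto)
  then have K: "mmul (2^n) (lift1 n q (madj rotJ)) (mmul (2^n) (lift1 n q A) (lift1 n q rotJ)) i j
       = lift1 n q (mmul 2 (madj rotJ) (mmul 2 A rotJ)) i j"
    using mmul_lift1_same[OF q i] by simp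
  have half_add: "lift1 n q (\<lambda>x y. (B x y + C x y) / 2) i j = (lift1 n q B i j + lift1 n q C i j) / 2"
    and half_diff: "lift1 n q (\<lambda>x y. (B x y - C x y) / 2) i j = (lift1 n q B i j - lift1 n q C i j) / 2"
    for B C by (simp_all add: lift1_def)
  show ?thesis
    unfolding rot_component_def rot_component1_def Let_def
    by (simp add: K half_add half_diff mmul_lift1_same[OF q i])
qed

lemma rot_component0_lift1_other:
  assumes q: "q \<in> {1..n}" and q1: "q \<noteq> 1" and n1: "1 \<le> n" and i: "i < 2^n" and j: "j < 2^n"
  shows "rot_component n q 0 (lift1 n 1 A) i j = lift1 n 1 A i j"
proof -
  have one: "1 \<in> {1..n}" using n1 by simp
  define X where "X = lift1 n 1 A"
  define J where "J = lift1 n q rotJ"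
  define K where "K = lift1 n q (madj rotJ)"
  have "mmul (2^n) K (mmul (2^n) X J) i j = mmul (2^n) K (mmul (2^n) J X) i j"
    by (rule mmul_entry_cong) (use mmul_lift1_commute[OF one q q1[symmetric]] in \<open>auto simp: X_def J_def\<close>)
  also have "\<dots> = mmul (2^n) (mmul (2^n) K J) X i j" by (simp add: mmul_assoc)
  also have "\<dots> = mmul (2^n) mid X i j"
    by (rule mmul_entry_cong)
      (use lift1_unitary[OF q i _ rotJ_unitary] in \<open>simp_all add: K_def J_def madj_lift1\<close>)
  also have "\<dots> = X i j" by (rule mmul_mid_left[OF i])
  finally show ?thesis unfolding rot_component_def Let_def X_def J_def K_def by simp
qed

section \<open>Path expansion of the objective\<close>

fun rot_qubits :: "gate list \<Rightarrow> nat list" where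
  "rot_qubits [] = []"
| "rot_qubits (Rot q # gs) = q # rot_qubits gs"
| "rot_qubits (CX c t # gs) = rot_qubits gs"

(* Controls never lie on qubit 1, so conjugating by a CNOT keeps the observable sigma_1 on qubit 1
   (and, unless qubit 1 is the target, sigma_3 on qubit 1) in place. *)
fun well_formed :: "nat \<Rightarrow> gate list \<Rightarrow> bool" where
  "well_formed n [] = True"
| "well_formed n (Rot q # gs) = (q \<in> {1..n} \<and> well_formed n gs)"
| "well_formed n (CX c t # gs) = (c \<in> {1..n} \<and> t \<in> {1..n} \<and> c \<noteq> t \<and> c \<noteq> 1 \<and> well_formed n gs)"

definition paths :: "nat \<Rightarrow> nat list set" where
  "paths P = {\<sigma>. length \<sigma> = P \<and> set \<sigma> \<subseteq> {..<3}}"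

fun path_op :: "nat \<Rightarrow> gate list \<Rightarrow> nat list \<Rightarrow> cmat \<Rightarrow> cmat" where
  "path_op n [] \<sigma> M = M"
| "path_op n (Rot q # gs) \<sigma> M = rot_component n q (hd \<sigma>) (path_op n gs (tl \<sigma>) M)"
| "path_op n (CX c t # gs) \<sigma> M = mmul (2^n) (madj (cnot n c t)) (mmul (2^n) (path_op n gs \<sigma> M) (cnot n c t))"

definition path_weight :: "nat list \<Rightarrow> (nat \<Rightarrow> real) \<Rightarrow> nat \<Rightarrow> real" where
  "path_weight \<sigma> \<theta> k = (\<Prod>j<length \<sigma>. trig_basis (\<sigma>!j) (\<theta> (k + j)))"

definition path_coeff :: "nat \<Rightarrow> gate list \<Rightarrow> cmat \<Rightarrow> nat list \<Rightarrow> real" where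
  "path_coeff n gs \<rho> \<sigma> = Re (mtrace (2^n) (mmul (2^n) (path_op n gs \<sigma> (lift1 n 1 pauliZ)) \<rho>))"

lemma finite_paths: "finite (paths P)"
proof -
  have "paths P = {xs. set xs \<subseteq> {..<3} \<and> length xs = P}" unfolding paths_def by auto
  then show ?thesis using finite_lists_length_eq[of "{..<3::nat}" P] by simp
qed

lemma paths_0: "paths 0 = {[]}"
  unfolding paths_def by auto

lemma paths_Suc: "paths (Suc P) = (\<lambda>(a, \<sigma>). a # \<sigma>) ` ({..<3} \<times> paths P)"
proof (intro equalityI subsetI)
  fix xs assume "xs \<in> paths (Suc P)"
  then obtain a ys where "xs = a # ys" "a < 3" "ys \<in> paths P"
    unfolding paths_def by (cases xs) auto
  then show "xs \<in> (\<lambda>(a, \<sigma>). a # \<sigma>) ` ({..<3} \<times> paths P)" by force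
qed (auto simp: paths_def)

lemma sum_paths_Suc: "(\<Sum>\<sigma>\<in>paths (Suc P). g \<sigma>) = (\<Sum>a<3. \<Sum>\<sigma>\<in>paths P. g (a # \<sigma>))"
proof -
  have inj: "inj_on (\<lambda>(a, \<sigma>). a # \<sigma>) ({..<3::nat} \<times> paths P)" by (auto simp: inj_on_def)
  have "(\<Sum>\<sigma>\<in>paths (Suc P). g \<sigma>) = (\<Sum>p\<in>{..<3} \<times> paths P. g (case p of (a, \<sigma>) \<Rightarrow> a # \<sigma>))"
    unfolding paths_Suc by (subst sum.reindex[OF inj]) (simp add: comp_def)
  also have "\<dots> = (\<Sum>a<3. \<Sum>\<sigma>\<in>paths P. g (a # \<sigma>))"
    by (subst sum.cartesian_product) (auto intro!: sum.cong split: prod.splits)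
  finally show ?thesis .
qed

lemma paths_nth_less: "\<sigma> \<in> paths P \<Longrightarrow> j < P \<Longrightarrow> \<sigma> ! j < 3"
  unfolding paths_def by (auto dest: nth_mem)

lemma length_paths: "\<sigma> \<in> paths P \<Longrightarrow> length \<sigma> = P"
  unfolding paths_def by auto

lemma path_weight_Cons: "path_weight (a # \<sigma>) \<theta> k = trig_basis a (\<theta> k) * path_weight \<sigma> \<theta> (Suc k)"
  unfolding path_weight_def by (simp only: length_Cons prod.lessThan_Suc_shift) simp

lemma conj_mmul_expansion:
  assumes A: "\<And>i j. i < N \<Longrightarrow> j < N \<Longrightarrow> mmul N (madj A) (mmul N M A) i j = (\<Sum>\<sigma>\<in>S. x \<sigma> * H \<sigma> i j)"
    and j: "j < N"
  shows "mmul N (madj (mmul N A G)) (mmul N M (mmul N A G)) i j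
       = (\<Sum>\<sigma>\<in>S. x \<sigma> * mmul N (madj G) (mmul N (H \<sigma>) G) i j)"
proof -
  have "mmul N (madj (mmul N A G)) (mmul N M (mmul N A G)) i j
      = mmul N (madj G) (mmul N (mmul N (madj A) (mmul N M A)) G) i j"
    by (simp only: madj_mmul mmul_assoc)
  also have "\<dots> = mmul N (madj G) (mmul N (\<lambda>i j. \<Sum>\<sigma>\<in>S. x \<sigma> * H \<sigma> i j) G) i j"
    using A j by (rule mmul_conj_entry_cong)
  also have "\<dots> = (\<Sum>\<sigma>\<in>S. x \<sigma> * mmul N (madj G) (mmul N (H \<sigma>) G) i j)"
    by (simp only: mmul_conj_sum)
  finally show ?thesis .
qed

lemma circ_conj_expansion:
  assumes "well_formed n gs" "i < 2^n" "j < 2^n"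
  shows "mmul (2^n) (madj (circ n gs \<theta> k)) (mmul (2^n) M (circ n gs \<theta> k)) i j
       = (\<Sum>\<sigma>\<in>paths (length (rot_qubits gs)). complex_of_real (path_weight \<sigma> \<theta> k) * path_op n gs \<sigma> M i j)"
  using assms
proof (induction gs arbitrary: k i j)
  case Nil
  then show ?case by (simp add: paths_0 path_weight_def madj_mid mmul_mid_left mmul_mid_right)
next
  case (Cons g gs)
  show ?case
  proof (cases g)
    case (Rot q)
    have q: "q \<in> {1..n}" and w: "well_formed n gs" using Cons.prems Rot by auto
    have "mmul (2^n) (madj (circ n (g # gs) \<theta> k)) (mmul (2^n) M (circ n (g # gs) \<theta> k)) i j
        = (\<Sum>\<sigma>\<in>paths (length (rot_qubits gs)). complex_of_real (path_weight \<sigma> \<theta> (Suc k)) *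
             (\<Sum>a<3. complex_of_real (trig_basis a (\<theta> k)) * rot_component n q a (path_op n gs \<sigma> M) i j))"
      using Rot conj_mmul_expansion[OF Cons.IH[OF w] Cons.prems(3)] conj_lift1_rotY[OF q Cons.prems(2,3)] by simp
    then show ?thesis
      unfolding Rot
      by (simp add: sum_paths_Suc path_weight_Cons sum_distrib_left algebra_simps sum.swap[of _ "{..<3}"])
  next
    case (CX c t)
    have w: "well_formed n gs" using Cons.prems CX by auto
    show ?thesis
      using CX conj_mmul_expansion[OF Cons.IH[OF w] Cons.prems(3)] by simp
  qed
qed

lemma objective_path_expansion:
  assumes w: "well_formed n gs" and P: "P = length (rot_qubits gs)"
  shows "objective n gs \<rho> \<theta> = 1/2 + 1/2 * (\<Sum>\<sigma>\<in>paths P. path_coeff n gs \<rho> \<sigma> * (\<Prod>j<P. trig_basis (\<sigma>!j) (\<theta> j)))"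
proof -
  define V where "V = circuit_unitary n gs \<theta>"
  define Z where "Z = lift1 n 1 pauliZ"
  define b where "b \<sigma> = (\<Prod>j<P. trig_basis (\<sigma>!j) (\<theta> j))" for \<sigma>
  have H: "mmul (2^n) (madj V) (mmul (2^n) Z V) i l
         = (\<Sum>\<sigma>\<in>paths P. complex_of_real (b \<sigma>) * path_op n gs \<sigma> Z i l)"
    if "i < 2^n" "l < 2^n" for i l
    unfolding V_def circuit_unitary_def circ_conj_expansion[OF w that] P
    by (intro sum.cong) (auto simp: path_weight_def b_def P length_paths)
  have "mtrace (2^n) (mmul (2^n) (mmul (2^n) (madj V) (mmul (2^n) Z V)) \<rho>)
      = (\<Sum>i<2^n. \<Sum>l<2^n. (\<Sum>\<sigma>\<in>paths P. complex_of_real (b \<sigma>) * path_op n gs \<sigma> Z i l) * \<rho> l i)"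
    unfolding mtrace_def mmul_def[of _ "mmul _ _ _"] using H by (auto intro!: sum.cong)
  also have "\<dots> = (\<Sum>\<sigma>\<in>paths P. complex_of_real (b \<sigma>) * mtrace (2^n) (mmul (2^n) (path_op n gs \<sigma> Z) \<rho>))"
    unfolding mtrace_def mmul_def
    by (simp add: sum_distrib_right sum_distrib_left mult.assoc sum.swap[of _ "paths P"])
  finally have "Re (mtrace (2^n) (mmul (2^n) (mmul (2^n) (madj V) (mmul (2^n) Z V)) \<rho>))
      = (\<Sum>\<sigma>\<in>paths P. path_coeff n gs \<rho> \<sigma> * b \<sigma>)"
    by (simp add: path_coeff_def Z_def mult.commute)
  then show ?thesis
    unfolding objective_def Let_def V_def[symmetric] Z_def[symmetric] mtrace_conj b_def by simp
qed

lemma circ_unitary: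
  assumes "well_formed n gs" "i < 2^n" "j < 2^n"
  shows "mmul (2^n) (madj (circ n gs \<theta> k)) (circ n gs \<theta> k) i j = mid i j"
  using assms
proof (induction gs arbitrary: k i j)
  case Nil
  then show ?case by (simp add: madj_mid mmul_mid_left)
next
  case (Cons g gs)
  have product: "mmul (2^n) (madj (mmul (2^n) A G)) (mmul (2^n) A G) i j = mid i j"
    if A: "\<And>i j. i < 2^n \<Longrightarrow> j < 2^n \<Longrightarrow> mmul (2^n) (madj A) A i j = mid i j"
      and G: "mmul (2^n) (madj G) G i j = mid i j" for A G
  proof -
    have "mmul (2^n) (madj (mmul (2^n) A G)) (mmul (2^n) A G) i j
        = mmul (2^n) (madj G) (mmul (2^n) (mmul (2^n) (madj A) A) G) i j"
      by (simp add: madj_mmul mmul_assoc)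
    also have "\<dots> = mmul (2^n) (madj G) (mmul (2^n) mid G) i j"
      by (rule mmul_conj_entry_cong) (use A Cons.prems in auto)
    also have "\<dots> = mmul (2^n) (madj G) G i j"
      by (rule mmul_entry_cong) (auto simp: mmul_mid_left)
    finally show ?thesis using G by simp
  qed
  show ?case
  proof (cases g)
    case (Rot q)
    then have "q \<in> {1..n}" using Cons.prems by simp
    then show ?thesis using Rot Cons product[OF Cons.IH lift1_unitary[OF _ Cons.prems(2,3) rotY_unitary]] by simp
  next
    case (CX c t)
    then show ?thesis using Cons product[OF Cons.IH cnot_unitary] by auto
  qed
qed

lemma conj_density_diag_nonneg:
  assumes "density_matrix n \<rho>"
  shows "0 \<le> Re (mmul (2^n) V (mmul (2^n) \<rho> (madj V)) i i)"
proof -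
  define v where "v j = cnj (V i j)" for j
  have "mmul (2^n) V (mmul (2^n) \<rho> (madj V)) i i = (\<Sum>j<2^n. \<Sum>k<2^n. V i j * \<rho> j k * cnj (V i k))"
    unfolding mmul_def madj_def by (simp add: sum_distrib_left mult.assoc)
  also have "\<dots> = (\<Sum>j<2^n. \<Sum>k<2^n. cnj (v j) * \<rho> j k * v k)"
    unfolding v_def by simp
  moreover have "0 \<le> Re (\<Sum>j<2^n. \<Sum>k<2^n. cnj (v j) * \<rho> j k * v k)"
    using assms unfolding density_matrix_def by blast
  ultimately show ?thesis by simp
qed

lemma mtrace_conj_unitary:
  assumes U: "\<And>i j. i < N \<Longrightarrow> j < N \<Longrightarrow> mmul N (madj V) V i j = mid i j"
  shows "mtrace N (mmul N V (mmul N \<rho> (madj V))) = mtrace N \<rho>"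
proof -
  have "mtrace N (mmul N V (mmul N \<rho> (madj V))) = mtrace N (mmul N (mmul N (madj V) V) \<rho>)"
  proof -
    have "mtrace N (mmul N V (mmul N \<rho> (madj V))) = mtrace N (mmul N (mmul N \<rho> (madj V)) V)"
      by (rule mtrace_mmul_commute)
    also have "\<dots> = mtrace N (mmul N \<rho> (mmul N (madj V) V))" by (simp only: mmul_assoc)
    finally show ?thesis by (simp only: mtrace_mmul_commute)
  qed
  also have "\<dots> = (\<Sum>i<N. \<Sum>l<N. mid i l * \<rho> l i)"
    unfolding mtrace_def mmul_def[of N "mmul N (madj V) V"] by (auto intro!: sum.cong simp: U)
  also have "\<dots> = mtrace N \<rho>"
    unfolding mtrace_def by (rule sum.cong) (auto simp: mmul_mid_left[unfolded mmul_def])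
  finally show ?thesis .
qed

lemma abs_Re_mtrace_lift1_pauliZ_le:
  assumes n1: "1 \<le> n" and pos: "\<And>i. i < 2^n \<Longrightarrow> 0 \<le> Re (M i i)"
  shows "\<bar>Re (mtrace (2^n) (mmul (2^n) (lift1 n 1 pauliZ) M))\<bar> \<le> Re (mtrace (2^n) M)"
proof -
  define z where "z i = (if qbit n 1 i = 0 then 1 else -1::real)" for i
  have Zd: "mmul (2^n) (lift1 n 1 pauliZ) M i i = complex_of_real (z i) * M i i" if i: "i < 2^n" for i
  proof -
    have "lift1 n 1 pauliZ i l = (if l = i then complex_of_real (z i) else 0)" if "l < 2^n" for l
      using lift1_diagonal[of 1 n i l pauliZ] n1 i that by (auto simp: pauliZ_def z_def)
    then have "mmul (2^n) (lift1 n 1 pauliZ) M i i = (\<Sum>l<2^n. if l = i then complex_of_real (z i) * M l i else 0)"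
      unfolding mmul_def by (intro sum.cong) auto
    then show ?thesis using i by simp
  qed
  have "\<bar>Re (mtrace (2^n) (mmul (2^n) (lift1 n 1 pauliZ) M))\<bar> = \<bar>\<Sum>i<2^n. z i * Re (M i i)\<bar>"
    unfolding mtrace_def using Zd by (simp add: Re_sum)
  also have "\<dots> \<le> (\<Sum>i<2^n. \<bar>z i * Re (M i i)\<bar>)" by (rule sum_abs)
  also have "\<dots> = Re (mtrace (2^n) M)"
    unfolding mtrace_def Re_sum by (rule sum.cong) (use pos in \<open>auto simp: z_def abs_mult\<close>)
  finally show ?thesis .
qed

lemma abs_objective_le:
  assumes w: "well_formed n gs" and n1: "1 \<le> n" and dens: "density_matrix n \<rho>"
  shows "\<bar>2 * objective n gs \<rho> \<theta> - 1\<bar> \<le> 1"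
proof -
  define V where "V = circuit_unitary n gs \<theta>"
  have U: "mmul (2^n) (madj V) V i j = mid i j" if "i < 2^n" "j < 2^n" for i j
    unfolding V_def circuit_unitary_def using circ_unitary[OF w that] .
  have "mtrace (2^n) (mmul (2^n) V (mmul (2^n) \<rho> (madj V))) = 1"
    using mtrace_conj_unitary[OF U] dens by (simp add: density_matrix_def)
  moreover have "\<bar>Re (mtrace (2^n) (mmul (2^n) (lift1 n 1 pauliZ) (mmul (2^n) V (mmul (2^n) \<rho> (madj V)))))\<bar>
      \<le> Re (mtrace (2^n) (mmul (2^n) V (mmul (2^n) \<rho> (madj V))))"
    by (rule abs_Re_mtrace_lift1_pauliZ_le[OF n1 conj_density_diag_nonneg[OF dens]])
  ultimately show ?thesis unfolding objective_def Let_def V_def[symmetric] by simp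
qed

section \<open>Orthogonality of the trigonometric basis\<close>

abbreviation unif_angle :: "real measure" where
  "unif_angle \<equiv> uniform_measure lborel {0..2*pi}"

lemma prob_space_unif_angle: "prob_space unif_angle"
  by (rule prob_space_uniform_measure) simp_all

lemma has_bochner_integral_unif_angle_FTC:
  assumes F: "\<And>x. DERIV F x :> g x" and g: "\<And>x. isCont g x"
  shows "has_bochner_integral unif_angle g ((F (2*pi) - F 0) / (2*pi))"
proof -
  have density: "unif_angle = density lborel (\<lambda>x. ennreal (indicator {0..2*pi} x / (2*pi)))"
  proof -
    have "indicator {0..2*pi} x / emeasure lborel {0..2*pi} = ennreal (indicator {0..2*pi} x / (2*pi))" for x :: real
      by (cases "x \<in> {0..2*pi}") (simp_all add: divide_ennreal[symmetric])
    then show ?thesis unfolding uniform_measure_def by simp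
  qed
  have "has_bochner_integral lborel (\<lambda>x. g x * indicator {0..2*pi} x) (F (2*pi) - F 0)"
    by (rule has_bochner_integral_FTC_Icc_real) (use F g in auto)
  then have "has_bochner_integral lborel (\<lambda>x. g x * indicator {0..2*pi} x * (1 / (2*pi))) ((F (2*pi) - F 0) * (1 / (2*pi)))"
    by (rule has_bochner_integral_mult_left)
  then have "has_bochner_integral lborel (\<lambda>x. (indicator {0..2*pi} x / (2*pi)) *\<^sub>R g x) ((F (2*pi) - F 0) / (2*pi))"
    by (rule has_bochner_integral_cong[THEN iffD1, rotated -1]) (auto simp: field_simps)
  moreover have "g \<in> borel_measurable lborel"
    using g by (auto intro!: borel_measurable_continuous_onI continuous_at_imp_continuous_on)
  ultimately show ?thesis unfolding density
    by (intro has_bochner_integral_density) auto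
qed

lemma sin_4pi: "sin (2 * (2 * pi)) = 0"
  by (simp only: sin_double) simp

lemma cos_4pi: "cos (2 * (2 * pi)) = 1"
  by (simp only: cos_double) simp

lemma sin_8pi: "sin (4 * (2 * pi)) = 0"
  using sin_double[of "2 * (2 * pi)"] by (simp add: sin_4pi)

lemma cos_4x: "cos (4 * x) = 2 * (cos (2 * x) * cos (2 * x)) - (1::real)"
  using cos_double_cos[of "2 * x"] by (simp add: power2_eq_square)

lemma unif_angle_integral_1: "has_bochner_integral unif_angle (\<lambda>t. 1::real) 1"
  using has_bochner_integral_unif_angle_FTC[of "\<lambda>x. x" "\<lambda>_. 1"] by simp

lemma unif_angle_integral_cos2: "has_bochner_integral unif_angle (\<lambda>t. cos (2 * t)) 0"
proof -
  have "has_bochner_integral unif_angle (\<lambda>t. cos (2 * t)) ((sin (2 * (2*pi)) / 2 - sin (2 * 0) / 2) / (2*pi))"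
    by (rule has_bochner_integral_unif_angle_FTC) (auto intro!: derivative_eq_intros)
  then show ?thesis by (simp add: sin_4pi)
qed

lemma unif_angle_integral_sin2: "has_bochner_integral unif_angle (\<lambda>t. sin (2 * t)) 0"
proof -
  have "has_bochner_integral unif_angle (\<lambda>t. sin (2 * t)) ((- cos (2 * (2*pi)) / 2 - (- cos (2 * 0) / 2)) / (2*pi))"
    by (rule has_bochner_integral_unif_angle_FTC) (auto intro!: derivative_eq_intros)
  then show ?thesis by (simp add: cos_4pi)
qed

lemma unif_angle_integral_cos2_sq: "has_bochner_integral unif_angle (\<lambda>t. cos (2 * t) * cos (2 * t)) (1/2)"
proof -
  have "has_bochner_integral unif_angle (\<lambda>t. cos (2 * t) * cos (2 * t))
          ((((2*pi)/2 + sin (4 * (2*pi)) / 8) - (0/2 + sin (4 * 0) / 8)) / (2*pi))"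
  proof (rule has_bochner_integral_unif_angle_FTC)
    fix x :: real
    have "1 / 2 + cos (4 * x) * 4 / 8 = cos (2 * x) * cos (2 * x)"
      unfolding cos_4x by (simp add: field_simps)
    then show "DERIV (\<lambda>x. x / 2 + sin (4 * x) / 8) x :> cos (2 * x) * cos (2 * x)"
      by (auto intro!: derivative_eq_intros)
  qed auto
  then show ?thesis by (simp add: sin_8pi)
qed

lemma unif_angle_integral_sin2_sq: "has_bochner_integral unif_angle (\<lambda>t. sin (2 * t) * sin (2 * t)) (1/2)"
proof -
  have "has_bochner_integral unif_angle (\<lambda>t. sin (2 * t) * sin (2 * t))
          ((((2*pi)/2 - sin (4 * (2*pi)) / 8) - (0/2 - sin (4 * 0) / 8)) / (2*pi))"
  proof (rule has_bochner_integral_unif_angle_FTC)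
    fix x :: real
    have "sin (2 * x) * sin (2 * x) = 1 - cos (2 * x) * cos (2 * x)"
      using sin_cos_squared_add[of "2*x"] by (simp add: power2_eq_square algebra_simps)
    moreover note cos_4x[of x]
    ultimately have "1 / 2 - cos (4 * x) * 4 / 8 = sin (2 * x) * sin (2 * x)"
      by linarith
    then show "DERIV (\<lambda>x. x / 2 - sin (4 * x) / 8) x :> sin (2 * x) * sin (2 * x)"
      by (auto intro!: derivative_eq_intros)
  qed auto
  then show ?thesis by (simp add: sin_8pi)
qed

lemma unif_angle_integral_cos2_sin2: "has_bochner_integral unif_angle (\<lambda>t. cos (2 * t) * sin (2 * t)) 0"
proof -
  have "has_bochner_integral unif_angle (\<lambda>t. cos (2 * t) * sin (2 * t))
          ((sin (2 * (2*pi)) * sin (2 * (2*pi)) / 4 - sin (2 * 0) * sin (2 * 0) / 4) / (2*pi))"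
    by (rule has_bochner_integral_unif_angle_FTC) (auto intro!: derivative_eq_intros)
  then show ?thesis by (simp add: sin_4pi)
qed

definition trig_norm :: "nat \<Rightarrow> real" where
  "trig_norm a = (if a = 0 then 1 else 1/2)"

lemma trig_basis_orthogonal:
  assumes "a < 3" "a' < 3"
  shows "has_bochner_integral unif_angle (\<lambda>t. trig_basis a t * trig_basis a' t) (if a = a' then trig_norm a else 0)"
proof -
  have "has_bochner_integral unif_angle (\<lambda>t. sin (2 * t) * cos (2 * t)) 0"
    using unif_angle_integral_cos2_sin2 by (simp add: mult.commute)
  then show ?thesis
    using less_3_cases[OF assms(1)] less_3_cases[OF assms(2)] unif_angle_integral_cos2_sin2
    by (auto simp: trig_basis_def trig_norm_def unif_angle_integral_1
      unif_angle_integral_cos2 unif_angle_integral_sin2 unif_angle_integral_cos2_sq unif_angle_integral_sin2_sq)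
qed

definition trig_basis_deriv :: "nat \<Rightarrow> real \<Rightarrow> real" where
  "trig_basis_deriv a t = (if a = 0 then 0 else if a = 1 then - 2 * sin (2*t) else 2 * cos (2*t))"

lemma DERIV_trig_basis: "DERIV (trig_basis a) t :> trig_basis_deriv a t"
  unfolding trig_basis_def trig_basis_deriv_def
  by (cases "a = 0"; cases "a = 1") (auto intro!: derivative_eq_intros)

definition trig_deriv_norm :: "nat \<Rightarrow> real" where
  "trig_deriv_norm a = (if a = 0 then 0 else 2)"

lemma trig_basis_deriv_orthogonal:
  assumes a: "a < 3" and a': "a' < 3"
  shows "has_bochner_integral unif_angle (\<lambda>t. trig_basis_deriv a t * trig_basis_deriv a' t)
           (if a = a' then trig_deriv_norm a else 0)"
proof -
  define swap where "swap a = (if a = 1 then 2 else if a = 2 then 1 else 0::nat)" for a :: nat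
  define dscale where "dscale a = (if a = 1 then -2 else if a = 2 then 2 else 0::real)" for a :: nat
  have deriv_swap: "trig_basis_deriv a t = dscale a * trig_basis (swap a) t" if "a < 3" for a t
    using less_3_cases[OF that] by (auto simp: trig_basis_deriv_def dscale_def trig_basis_def swap_def)
  have "swap a < 3" "swap a' < 3" by (auto simp: swap_def)
  then have "has_bochner_integral unif_angle (\<lambda>t. (dscale a * dscale a') * (trig_basis (swap a) t * trig_basis (swap a') t))
          ((dscale a * dscale a') * (if swap a = swap a' then trig_norm (swap a) else 0))"
    by (intro has_bochner_integral_mult_right trig_basis_orthogonal)
  moreover have "(dscale a * dscale a') * (if swap a = swap a' then trig_norm (swap a) else 0)
      = (if a = a' then trig_deriv_norm a else 0)"
    using less_3_cases[OF a] less_3_cases[OF a'] by (auto simp: dscale_def swap_def trig_norm_def trig_deriv_norm_def)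
  ultimately show ?thesis by (simp add: deriv_swap[OF a] deriv_swap[OF a'] algebra_simps)
qed

lemma has_bochner_integral_product_basis:
  fixes u :: "nat \<Rightarrow> nat \<Rightarrow> real \<Rightarrow> real"
  assumes orth: "\<And>j a a'. j < P \<Longrightarrow> a < 3 \<Longrightarrow> a' < 3 \<Longrightarrow>
      has_bochner_integral unif_angle (\<lambda>t. u j a t * u j a' t) (if a = a' then c j a else 0)"
    and s: "\<sigma> \<in> paths P" and s': "\<sigma>' \<in> paths P"
  shows "has_bochner_integral (PiM {..<P} (\<lambda>_. unif_angle))
      (\<lambda>\<theta>. \<Prod>j<P. u j (\<sigma>!j) (\<theta> j) * u j (\<sigma>'!j) (\<theta> j))
      (if \<sigma> = \<sigma>' then (\<Prod>j<P. c j (\<sigma>!j)) else 0)"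
proof -
  interpret product_prob_space "\<lambda>_. unif_angle" "{..<P}"
    by (simp add: product_prob_space_def product_sigma_finite_def product_prob_space_axioms_def
        prob_space_unif_angle prob_space_imp_sigma_finite)
  let ?f = "\<lambda>j t. u j (\<sigma>!j) t * u j (\<sigma>'!j) t"
  have "has_bochner_integral unif_angle (?f j) (if \<sigma>!j = \<sigma>'!j then c j (\<sigma>!j) else 0)" if "j \<in> {..<P}" for j
    using orth[of j "\<sigma>!j" "\<sigma>'!j"] that paths_nth_less[OF s] paths_nth_less[OF s'] by auto
  then have int: "integrable unif_angle (?f j)"
    and val: "integral\<^sup>L unif_angle (?f j) = (if \<sigma>!j = \<sigma>'!j then c j (\<sigma>!j) else 0)"
    if "j \<in> {..<P}" for j
    using that by (simp_all add: has_bochner_integral_iff)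
  have "integral\<^sup>L (PiM {..<P} (\<lambda>_. unif_angle)) (\<lambda>\<theta>. \<Prod>j\<in>{..<P}. ?f j (\<theta> j))
      = (\<Prod>j\<in>{..<P}. if \<sigma>!j = \<sigma>'!j then c j (\<sigma>!j) else 0)"
    using product_integral_prod[OF finite_lessThan int] val by simp
  also have "\<dots> = (if \<sigma> = \<sigma>' then (\<Prod>j<P. c j (\<sigma>!j)) else 0)"
  proof (cases "\<sigma> = \<sigma>'")
    case False
    then obtain j where "j < P" "\<sigma>!j \<noteq> \<sigma>'!j"
      using nth_equalityI[of \<sigma> \<sigma>'] length_paths[OF s] length_paths[OF s'] by auto
    then have "(\<Prod>j<P. if \<sigma>!j = \<sigma>'!j then c j (\<sigma>!j) else 0) = 0"
      by (intro prod_zero) auto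
    with False show ?thesis by simp
  qed simp
  finally show ?thesis
    using product_integrable_prod[OF finite_lessThan int] by (simp add: has_bochner_integral_iff)
qed

lemma has_bochner_integral_sq_product_expansion:
  fixes u :: "nat \<Rightarrow> nat \<Rightarrow> real \<Rightarrow> real" and x :: "nat list \<Rightarrow> real"
  assumes orth: "\<And>j a a'. j < P \<Longrightarrow> a < 3 \<Longrightarrow> a' < 3 \<Longrightarrow>
      has_bochner_integral unif_angle (\<lambda>t. u j a t * u j a' t) (if a = a' then c j a else 0)"
  shows "has_bochner_integral (PiM {..<P} (\<lambda>_. unif_angle))
           (\<lambda>\<theta>. (\<Sum>\<sigma>\<in>paths P. x \<sigma> * (\<Prod>j<P. u j (\<sigma>!j) (\<theta> j)))\<^sup>2)
           (\<Sum>\<sigma>\<in>paths P. (x \<sigma>)\<^sup>2 * (\<Prod>j<P. c j (\<sigma>!j)))"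
proof -
  have "has_bochner_integral (PiM {..<P} (\<lambda>_. unif_angle))
      (\<lambda>\<theta>. \<Sum>\<sigma>\<in>paths P. \<Sum>\<sigma>'\<in>paths P. x \<sigma> * x \<sigma>' * (\<Prod>j<P. u j (\<sigma>!j) (\<theta> j) * u j (\<sigma>'!j) (\<theta> j)))
      (\<Sum>\<sigma>\<in>paths P. \<Sum>\<sigma>'\<in>paths P. x \<sigma> * x \<sigma>' * (if \<sigma> = \<sigma>' then (\<Prod>j<P. c j (\<sigma>!j)) else 0))"
    by (intro has_bochner_integral_sum has_bochner_integral_mult_right has_bochner_integral_product_basis[OF orth])
  moreover have "(\<Sum>\<sigma>\<in>paths P. \<Sum>\<sigma>'\<in>paths P. x \<sigma> * x \<sigma>' * (if \<sigma> = \<sigma>' then (\<Prod>j<P. c j (\<sigma>!j)) else 0))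
      = (\<Sum>\<sigma>\<in>paths P. (x \<sigma>)\<^sup>2 * (\<Prod>j<P. c j (\<sigma>!j)))"
    by (intro sum.cong refl)
      (simp add: if_distrib[where f="\<lambda>y. _ * y"] sum.delta finite_paths power2_eq_square cong: if_cong)
  moreover have "(\<lambda>\<theta>. \<Sum>\<sigma>\<in>paths P. \<Sum>\<sigma>'\<in>paths P. x \<sigma> * x \<sigma>' * (\<Prod>j<P. u j (\<sigma>!j) (\<theta> j) * u j (\<sigma>'!j) (\<theta> j)))
     = (\<lambda>\<theta>. (\<Sum>\<sigma>\<in>paths P. x \<sigma> * (\<Prod>j<P. u j (\<sigma>!j) (\<theta> j)))\<^sup>2)"
    by (auto simp: power2_eq_square sum_product prod.distrib algebra_simps intro!: ext)
  ultimately show ?thesis by simp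
qed

definition grad_factor :: "nat \<Rightarrow> nat \<Rightarrow> nat \<Rightarrow> real \<Rightarrow> real" where
  "grad_factor k j a t = (if j = k then trig_basis_deriv a t else trig_basis a t)"

definition grad_factor_norm :: "nat \<Rightarrow> nat \<Rightarrow> nat \<Rightarrow> real" where
  "grad_factor_norm k j a = (if j = k then trig_deriv_norm a else trig_norm a)"

lemma grad_factor_orthogonal:
  assumes "a < 3" "a' < 3"
  shows "has_bochner_integral unif_angle (\<lambda>t. grad_factor k j a t * grad_factor k j a' t)
           (if a = a' then grad_factor_norm k j a else 0)"
proof (cases "j = k")
  case True
  show ?thesis
    unfolding grad_factor_def grad_factor_norm_def if_P[OF True] by (rule trig_basis_deriv_orthogonal[OF assms])
next
  case False
  show ?thesis
    unfolding grad_factor_def grad_factor_norm_def if_not_P[OF False] by (rule trig_basis_orthogonal[OF assms])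
qed

lemma deriv_objective:
  assumes w: "well_formed n gs" and P: "P = length (rot_qubits gs)" and k: "k < P"
  shows "deriv (\<lambda>t. objective n gs \<rho> (\<theta>(k:=t))) (\<theta> k)
       = (\<Sum>\<sigma>\<in>paths P. (path_coeff n gs \<rho> \<sigma> / 2) * (\<Prod>j<P. grad_factor k j (\<sigma>!j) (\<theta> j)))"
proof -
  define C where "C \<sigma> = path_coeff n gs \<rho> \<sigma> * (\<Prod>j\<in>{..<P}-{k}. trig_basis (\<sigma>!j) (\<theta> j))" for \<sigma>
  have kk: "k \<in> {..<P}" using k by simp
  have "objective n gs \<rho> (\<theta>(k:=t)) = 1/2 + 1/2 * (\<Sum>\<sigma>\<in>paths P. C \<sigma> * trig_basis (\<sigma>!k) t)" for t
  proof -
    have "(\<Prod>j<P. trig_basis (\<sigma>!j) ((\<theta>(k:=t)) j)) = trig_basis (\<sigma>!k) t * (\<Prod>j\<in>{..<P}-{k}. trig_basis (\<sigma>!j) (\<theta> j))" for \<sigma>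
      by (subst prod.remove[OF finite_lessThan kk]) (auto intro!: prod.cong)
    then show ?thesis unfolding objective_path_expansion[OF w P] C_def by (simp add: ac_simps)
  qed
  moreover have "DERIV (\<lambda>t. 1/2 + 1/2 * (\<Sum>\<sigma>\<in>paths P. C \<sigma> * trig_basis (\<sigma>!k) t)) (\<theta> k)
           :> 0 + 1/2 * (\<Sum>\<sigma>\<in>paths P. C \<sigma> * trig_basis_deriv (\<sigma>!k) (\<theta> k))"
    by (intro DERIV_add DERIV_const DERIV_cmult DERIV_sum DERIV_trig_basis)
  moreover have "(\<Prod>j<P. grad_factor k j (\<sigma>!j) (\<theta> j))
      = trig_basis_deriv (\<sigma>!k) (\<theta> k) * (\<Prod>j\<in>{..<P}-{k}. trig_basis (\<sigma>!j) (\<theta> j))" for \<sigma>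
    by (subst prod.remove[OF finite_lessThan kk]) (auto intro!: prod.cong simp: grad_factor_def)
  ultimately show ?thesis
    using DERIV_imp_deriv by (simp add: C_def sum_distrib_left ac_simps)
qed

lemma expected_grad_sq_eq:
  assumes w: "well_formed n gs" and P: "P = length (rot_qubits gs)"
  shows "expect_params P (grad_sq P (objective n gs \<rho>))
       = (\<Sum>k<P. \<Sum>\<sigma>\<in>paths P. (path_coeff n gs \<rho> \<sigma> / 2)\<^sup>2 * (\<Prod>j<P. grad_factor_norm k j (\<sigma>!j)))"
proof -
  have "grad_sq P (objective n gs \<rho>) =
     (\<lambda>\<theta>. \<Sum>k<P. (\<Sum>\<sigma>\<in>paths P. (path_coeff n gs \<rho> \<sigma> / 2) * (\<Prod>j<P. grad_factor k j (\<sigma>!j) (\<theta> j)))\<^sup>2)"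
    unfolding grad_sq_def using deriv_objective[OF w P] by auto
  moreover have "has_bochner_integral (PiM {..<P} (\<lambda>_. unif_angle))
     (\<lambda>\<theta>. \<Sum>k<P. (\<Sum>\<sigma>\<in>paths P. (path_coeff n gs \<rho> \<sigma> / 2) * (\<Prod>j<P. grad_factor k j (\<sigma>!j) (\<theta> j)))\<^sup>2)
     (\<Sum>k<P. \<Sum>\<sigma>\<in>paths P. (path_coeff n gs \<rho> \<sigma> / 2)\<^sup>2 * (\<Prod>j<P. grad_factor_norm k j (\<sigma>!j)))"
    by (intro has_bochner_integral_sum has_bochner_integral_sq_product_expansion grad_factor_orthogonal)
  ultimately show ?thesis unfolding expect_params_def by (simp add: has_bochner_integral_iff)
qed

(* By Parseval the sum is the mean of (2 f - 1)^2, and |2 f - 1| <= 1. *)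
lemma sum_path_coeff_sq_le_1:
  assumes w: "well_formed n gs" and hP: "P = length (rot_qubits gs)" and n1: "1 \<le> n"
    and dens: "density_matrix n \<rho>"
  shows "(\<Sum>\<sigma>\<in>paths P. (path_coeff n gs \<rho> \<sigma>)\<^sup>2 * (\<Prod>j<P. trig_norm (\<sigma>!j))) \<le> 1"
proof -
  interpret product_prob_space "\<lambda>_. unif_angle" "{..<P}"
    by (simp add: product_prob_space_def product_sigma_finite_def product_prob_space_axioms_def
        prob_space_unif_angle prob_space_imp_sigma_finite)
  have "has_bochner_integral (PiM {..<P} (\<lambda>_. unif_angle))
     (\<lambda>\<theta>. (\<Sum>\<sigma>\<in>paths P. path_coeff n gs \<rho> \<sigma> * (\<Prod>j<P. trig_basis (\<sigma>!j) (\<theta> j)))\<^sup>2)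
     (\<Sum>\<sigma>\<in>paths P. (path_coeff n gs \<rho> \<sigma>)\<^sup>2 * (\<Prod>j<P. trig_norm (\<sigma>!j)))"
    by (intro has_bochner_integral_sq_product_expansion trig_basis_orthogonal)
  moreover have "(\<lambda>\<theta>. (\<Sum>\<sigma>\<in>paths P. path_coeff n gs \<rho> \<sigma> * (\<Prod>j<P. trig_basis (\<sigma>!j) (\<theta> j)))\<^sup>2)
      = (\<lambda>\<theta>. (2 * objective n gs \<rho> \<theta> - 1)\<^sup>2)"
    using objective_path_expansion[OF w hP] by auto
  ultimately have h: "has_bochner_integral (PiM {..<P} (\<lambda>_. unif_angle)) (\<lambda>\<theta>. (2 * objective n gs \<rho> \<theta> - 1)\<^sup>2)
     (\<Sum>\<sigma>\<in>paths P. (path_coeff n gs \<rho> \<sigma>)\<^sup>2 * (\<Prod>j<P. trig_norm (\<sigma>!j)))"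
    by simp
  have "integral\<^sup>L (PiM {..<P} (\<lambda>_. unif_angle)) (\<lambda>\<theta>. (2 * objective n gs \<rho> \<theta> - 1)\<^sup>2)
      \<le> integral\<^sup>L (PiM {..<P} (\<lambda>_. unif_angle)) (\<lambda>\<theta>. 1)"
  proof (rule integral_mono)
    show "integrable (PiM {..<P} (\<lambda>_. unif_angle)) (\<lambda>\<theta>. (2 * objective n gs \<rho> \<theta> - 1)\<^sup>2)"
      using h by (simp add: has_bochner_integral_iff)
    fix \<theta> :: "nat \<Rightarrow> real"
    show "(2 * objective n gs \<rho> \<theta> - 1)\<^sup>2 \<le> 1"
      using abs_objective_le[OF w n1 dens, of \<theta>] by (simp add: abs_square_le_1)
  qed simp
  also have "\<dots> = 1" by (simp add: P.prob_space)
  finally show ?thesis using h by (simp add: has_bochner_integral_iff)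
qed

lemma prod_grad_factor_norm_le:
  assumes k: "k < P"
  shows "(\<Prod>j<P. grad_factor_norm k j (\<sigma>!j)) \<le> 4 * (\<Prod>j<P. trig_norm (\<sigma>!j))"
    and "\<sigma>!k \<noteq> 0 \<Longrightarrow> (\<Prod>j<P. grad_factor_norm k j (\<sigma>!j)) = 4 * (\<Prod>j<P. trig_norm (\<sigma>!j))"
proof -
  have kk: "k \<in> {..<P}" using k by simp
  define R where "R = (\<Prod>j\<in>{..<P}-{k}. trig_norm (\<sigma>!j))"
  have R: "0 \<le> R" unfolding R_def by (intro prod_nonneg) (simp add: trig_norm_def)
  have factor: "(\<Prod>j<P. grad_factor_norm k j (\<sigma>!j)) = trig_deriv_norm (\<sigma>!k) * R"
    unfolding R_def by (subst prod.remove[OF finite_lessThan kk]) (auto intro!: prod.cong simp: grad_factor_norm_def)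
  have norm: "(\<Prod>j<P. trig_norm (\<sigma>!j)) = trig_norm (\<sigma>!k) * R"
    unfolding R_def by (rule prod.remove[OF finite_lessThan kk])
  show "(\<Prod>j<P. grad_factor_norm k j (\<sigma>!j)) \<le> 4 * (\<Prod>j<P. trig_norm (\<sigma>!j))"
    unfolding factor norm using R by (simp add: trig_deriv_norm_def trig_norm_def)
  show "\<sigma>!k \<noteq> 0 \<Longrightarrow> (\<Prod>j<P. grad_factor_norm k j (\<sigma>!j)) = 4 * (\<Prod>j<P. trig_norm (\<sigma>!j))"
    unfolding factor norm by (simp add: trig_deriv_norm_def trig_norm_def)
qed

theorem expected_grad_sq_le_num_params:
  assumes w: "well_formed n gs" and P: "P = length (rot_qubits gs)" and n1: "1 \<le> n"
    and dens: "density_matrix n \<rho>"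
  shows "expect_params P (grad_sq P (objective n gs \<rho>)) \<le> real P"
proof -
  have "expect_params P (grad_sq P (objective n gs \<rho>))
       \<le> (\<Sum>k<P. \<Sum>\<sigma>\<in>paths P. (path_coeff n gs \<rho> \<sigma>)\<^sup>2 * (\<Prod>j<P. trig_norm (\<sigma>!j)))"
    unfolding expected_grad_sq_eq[OF w P]
  proof (intro sum_mono)
    fix k \<sigma> assume "k \<in> {..<P}"
    then have "(path_coeff n gs \<rho> \<sigma> / 2)\<^sup>2 * (\<Prod>j<P. grad_factor_norm k j (\<sigma>!j))
        \<le> (path_coeff n gs \<rho> \<sigma> / 2)\<^sup>2 * (4 * (\<Prod>j<P. trig_norm (\<sigma>!j)))"
      by (intro mult_left_mono prod_grad_factor_norm_le) auto
    then show "(path_coeff n gs \<rho> \<sigma> / 2)\<^sup>2 * (\<Prod>j<P. grad_factor_norm k j (\<sigma>!j))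
        \<le> (path_coeff n gs \<rho> \<sigma>)\<^sup>2 * (\<Prod>j<P. trig_norm (\<sigma>!j))"
      by (simp add: power2_eq_square)
  qed
  also have "\<dots> \<le> (\<Sum>k<P. 1)"
    by (intro sum_mono sum_path_coeff_sq_le_1[OF w P n1 dens])
  finally show ?thesis by simp
qed

section \<open>Paths ending in a Pauli operator on qubit 1\<close>

datatype xz_pauli = PX | PZ

fun pauli_of :: "xz_pauli \<Rightarrow> cmat" where
  "pauli_of PX = pauliX"
| "pauli_of PZ = pauliZ"

(* The Paulis on qubit 1 that can be reached from sigma_3 on qubit 1, going backwards through the
   circuit along a path that branches exactly at the rotations on qubit 1: such a rotation reaches both
   sigma_1 and sigma_3 from either, and a CNOT with target qubit 1 preserves sigma_1 but not sigma_3. *)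
fun reach_step :: "gate \<Rightarrow> xz_pauli set \<Rightarrow> xz_pauli set" where
  "reach_step (Rot q) S = (if q = 1 \<and> S \<noteq> {} then UNIV else S)"
| "reach_step (CX c t) S = (if t = 1 then S \<inter> {PX} else S)"

definition reachable_paulis :: "gate list \<Rightarrow> xz_pauli set" where
  "reachable_paulis gs = foldr reach_step gs {PZ}"

definition signed_eq :: "nat \<Rightarrow> cmat \<Rightarrow> cmat \<Rightarrow> bool" where
  "signed_eq n A B \<longleftrightarrow> (\<exists>s::complex. (s = 1 \<or> s = -1) \<and> (\<forall>i<2^n. \<forall>j<2^n. A i j = s * B i j))"

lemma signed_eqI: "(\<And>i j. i < 2^n \<Longrightarrow> j < 2^n \<Longrightarrow> A i j = B i j) \<Longrightarrow> signed_eq n A B"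
  unfolding signed_eq_def by (intro exI[of _ 1]) simp

lemma signed_eq_trans:
  assumes "signed_eq n A B" "signed_eq n B C"
  shows "signed_eq n A C"
proof -
  obtain s s' where "s = 1 \<or> s = -1" "\<forall>i<2^n. \<forall>j<2^n. A i j = s * B i j"
    "s' = 1 \<or> s' = -1" "\<forall>i<2^n. \<forall>j<2^n. B i j = s' * C i j"
    using assms unfolding signed_eq_def by blast
  then show ?thesis unfolding signed_eq_def by (intro exI[of _ "s * s'"]) auto
qed

lemma signed_eq_rot_component:
  assumes "signed_eq n A B"
  shows "signed_eq n (rot_component n q a A) (rot_component n q a B)"
proof -
  obtain s where s: "s = 1 \<or> s = -1" and AB: "\<forall>i<2^n. \<forall>j<2^n. A i j = s * B i j"
    using assms unfolding signed_eq_def by blast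
  have "rot_component n q a A i j = s * rot_component n q a B i j" if "i < 2^n" "j < 2^n" for i j
    using rot_component_cong[of n A "\<lambda>i j. s * B i j", OF _ that] AB rot_component_scale by simp
  then show ?thesis unfolding signed_eq_def using s by blast
qed

lemma rot_component1_pauli:
  assumes "a < 2" "b < 2"
  shows "rot_component1 1 pauliX a b = pauliX a b" "rot_component1 2 pauliX a b = pauliZ a b"
        "rot_component1 1 pauliZ a b = pauliZ a b" "rot_component1 2 pauliZ a b = - pauliX a b"
  using assms
  by (auto dest!: less_2_cases simp: rot_component1_def mmul_def sum_lessThan_2 madj_def rotJ_def pauliX_def pauliZ_def)

lemma rot_component_qubit1_pauli:
  assumes n1: "1 \<le> n"
  obtains a where "0 < a" "a < 3"
    "signed_eq n (rot_component n 1 a (lift1 n 1 (pauli_of x))) (lift1 n 1 (pauli_of y))"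
proof -
  define a where "a = (if y = x then 1 else 2::nat)"
  define s where "s = (if x = PZ \<and> y = PX then -1 else 1::complex)"
  have "rot_component1 a (pauli_of x) u v = s * pauli_of y u v" if "u < 2" "v < 2" for u v
    using rot_component1_pauli[OF that] unfolding a_def s_def by (cases x; cases y) auto
  then have "lift1 n 1 (rot_component1 a (pauli_of x)) = (\<lambda>i j. s * lift1 n 1 (pauli_of y) i j)"
    unfolding lift1_scale[symmetric] by (rule lift1_cong)
  then have "signed_eq n (rot_component n 1 a (lift1 n 1 (pauli_of x))) (lift1 n 1 (pauli_of y))"
    unfolding signed_eq_def using rot_component_lift1_same[of 1 n] n1
    by (intro exI[of _ s]) (auto simp: s_def)
  then show thesis by (intro that[of a]) (auto simp: a_def)
qed

lemma signed_eq_cnot_conj: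
  assumes c: "c \<in> {1..n}" and t: "t \<in> {1..n}" and ct: "c \<noteq> t" and c1: "c \<noteq> 1" and n1: "1 \<le> n"
    and y: "t = 1 \<Longrightarrow> y = PX" and A: "signed_eq n A (lift1 n 1 (pauli_of y))"
  shows "signed_eq n (mmul (2^n) (madj (cnot n c t)) (mmul (2^n) A (cnot n c t))) (lift1 n 1 (pauli_of y))"
proof -
  obtain s where s: "s = 1 \<or> s = -1" and As: "\<forall>i<2^n. \<forall>j<2^n. A i j = s * lift1 n 1 (pauli_of y) i j"
    using A unfolding signed_eq_def by blast
  have flip: "\<forall>a<2. \<forall>b<2. pauli_of y (1 - a) (1 - b) = pauli_of y a b" if "t = 1"
    using y[OF that] by (auto dest!: less_2_cases simp: pauliX_def)
  have "mmul (2^n) (madj (cnot n c t)) (mmul (2^n) A (cnot n c t)) i j = s * lift1 n 1 (pauli_of y) i j"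
    if i: "i < 2^n" and j: "j < 2^n" for i j
    using cnot_conj_entry[OF t i j] As cnot_perm_less[OF t i] cnot_perm_less[OF t j]
      lift1_qubit1_cnot_perm[OF c t ct c1 n1 flip] by simp
  then show ?thesis unfolding signed_eq_def using s by blast
qed

(* The path sigma branches exactly at the rotations on qubit 1 and its term of the evolved sigma_3 on
   qubit 1 is, up to sign, the Pauli y on qubit 1. *)
definition pauli_path :: "nat \<Rightarrow> gate list \<Rightarrow> nat list \<Rightarrow> xz_pauli \<Rightarrow> bool" where
  "pauli_path n gs \<sigma> y \<longleftrightarrow> \<sigma> \<in> paths (length (rot_qubits gs)) \<and>
     (\<forall>j<length (rot_qubits gs). \<sigma>!j \<noteq> 0 \<longleftrightarrow> rot_qubits gs ! j = 1) \<and>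
     signed_eq n (path_op n gs \<sigma> (lift1 n 1 pauliZ)) (lift1 n 1 (pauli_of y))"

lemma pauli_path_Nil: "pauli_path n [] [] PZ"
  unfolding pauli_path_def by (auto simp: paths_0 intro: signed_eqI)

lemma pauli_path_Rot_qubit1:
  assumes n1: "1 \<le> n" and \<sigma>: "pauli_path n gs \<sigma> x"
  obtains a where "pauli_path n (Rot 1 # gs) (a # \<sigma>) y"
proof -
  obtain a where a: "0 < a" "a < 3"
    "signed_eq n (rot_component n 1 a (lift1 n 1 (pauli_of x))) (lift1 n 1 (pauli_of y))"
    using rot_component_qubit1_pauli[OF n1] .
  have "pauli_path n (Rot 1 # gs) (a # \<sigma>) y"
    using \<sigma> a signed_eq_trans[OF signed_eq_rot_component a(3)]
    unfolding pauli_path_def by (auto simp: paths_def nth_Cons split: nat.split)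
  then show thesis by (rule that)
qed

lemma pauli_path_Rot_other:
  assumes q: "q \<in> {1..n}" "q \<noteq> 1" and n1: "1 \<le> n" and \<sigma>: "pauli_path n gs \<sigma> y"
  shows "pauli_path n (Rot q # gs) (0 # \<sigma>) y"
proof -
  have "signed_eq n (rot_component n q 0 (lift1 n 1 (pauli_of y))) (lift1 n 1 (pauli_of y))"
    using rot_component0_lift1_other[OF q n1] by (intro signed_eqI)
  then show ?thesis
    using \<sigma> q signed_eq_trans[OF signed_eq_rot_component]
    unfolding pauli_path_def by (auto simp: paths_def nth_Cons split: nat.split)
qed

lemma pauli_path_CX:
  assumes "c \<in> {1..n}" "t \<in> {1..n}" "c \<noteq> t" "c \<noteq> 1" "1 \<le> n" "t = 1 \<Longrightarrow> y = PX"
    and \<sigma>: "pauli_path n gs \<sigma> y"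
  shows "pauli_path n (CX c t # gs) \<sigma> y"
  using \<sigma> signed_eq_cnot_conj[OF assms(1-6)] unfolding pauli_path_def by simp

lemma reachable_pauli_path:
  assumes "well_formed n gs" "1 \<le> n" "y \<in> reachable_paulis gs"
  shows "\<exists>\<sigma>. pauli_path n gs \<sigma> y"
  using assms
proof (induction gs arbitrary: y)
  case Nil
  then show ?case using pauli_path_Nil by (auto simp: reachable_paulis_def)
next
  case (Cons g gs)
  show ?case
  proof (cases g)
    case (Rot q)
    show ?thesis
    proof (cases "q = 1")
      case True
      then obtain x where "x \<in> reachable_paulis gs"
        using Cons.prems(3) Rot by (auto simp: reachable_paulis_def split: if_splits)
      moreover have "well_formed n gs" using Cons.prems(1) Rot by simp
      ultimately obtain \<sigma> where "pauli_path n gs \<sigma> x" using Cons.IH Cons.prems(2) by blast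
      then obtain a where "pauli_path n (Rot 1 # gs) (a # \<sigma>) y"
        using pauli_path_Rot_qubit1[OF Cons.prems(2)] by blast
      then show ?thesis using Rot True by blast
    next
      case False
      have "y \<in> reachable_paulis gs" "well_formed n gs" "q \<in> {1..n}"
        using Cons.prems Rot False by (auto simp: reachable_paulis_def)
      then obtain \<sigma> where "pauli_path n gs \<sigma> y" using Cons.IH Cons.prems(2) by blast
      then show ?thesis using pauli_path_Rot_other[OF \<open>q \<in> {1..n}\<close> False Cons.prems(2)] Rot by blast
    qed
  next
    case (CX c t)
    have cx: "c \<in> {1..n}" "t \<in> {1..n}" "c \<noteq> t" "c \<noteq> 1" and "well_formed n gs"
      using Cons.prems(1) CX by auto
    moreover have "y \<in> reachable_paulis gs" and yX: "t = 1 \<Longrightarrow> y = PX"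
      using Cons.prems(3) CX by (auto simp: reachable_paulis_def split: if_splits)
    ultimately obtain \<sigma> where "pauli_path n gs \<sigma> y" using Cons.IH Cons.prems(2) by blast
    then show ?thesis using pauli_path_CX[OF cx Cons.prems(2) yX] CX by blast
  qed
qed

lemma path_coeff_sq_eq:
  assumes "signed_eq n (path_op n gs \<sigma> (lift1 n 1 pauliZ)) A"
  shows "(path_coeff n gs \<rho> \<sigma>)\<^sup>2 = (Re (mtrace (2^n) (mmul (2^n) A \<rho>)))\<^sup>2"
proof -
  obtain s where s: "s = 1 \<or> s = -1"
    and A: "\<forall>i<2^n. \<forall>j<2^n. path_op n gs \<sigma> (lift1 n 1 pauliZ) i j = s * A i j"
    using assms unfolding signed_eq_def by blast
  have "mtrace (2^n) (mmul (2^n) (path_op n gs \<sigma> (lift1 n 1 pauliZ)) \<rho>) = mtrace (2^n) (mmul (2^n) (\<lambda>i j. s * A i j) \<rho>)"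
    unfolding mtrace_def by (rule sum.cong[OF refl], rule mmul_entry_cong) (use A in auto)
  also have "\<dots> = s * mtrace (2^n) (mmul (2^n) A \<rho>)"
    unfolding mmul_scale_left mtrace_def by (simp add: sum_distrib_left)
  finally show ?thesis unfolding path_coeff_def using s by auto
qed

lemma prod_trig_norm_eq:
  assumes "\<forall>j<P. \<sigma>!j \<noteq> 0 \<longleftrightarrow> j \<in> K" "K \<subseteq> {..<P}"
  shows "(\<Prod>j<P. trig_norm (\<sigma>!j)) = (1/2) ^ card K"
proof -
  have "(\<Prod>j<P. trig_norm (\<sigma>!j)) = (\<Prod>j<P. if j \<in> K then 1/2 else 1)"
    by (rule prod.cong) (use assms(1) in \<open>auto simp: trig_norm_def\<close>)
  also have "\<dots> = (1/2) ^ card K"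
    using assms(2) by (simp add: prod.If_cases Int_absorb1)
  finally show ?thesis .
qed

lemma card_nth_eq_count_list: "card {j. j < length xs \<and> xs ! j = x} = count_list xs x"
  by (simp add: count_list_eq_length_filter length_filter_conv_card eq_commute)

lemma pauli_path_grad_contribution:
  assumes \<sigma>: "pauli_path n gs \<sigma> y" and P: "P = length (rot_qubits gs)"
    and k: "k < P" "rot_qubits gs ! k = 1"
  shows "(path_coeff n gs \<rho> \<sigma> / 2)\<^sup>2 * (\<Prod>j<P. grad_factor_norm k j (\<sigma>!j))
       = (Re (mtrace (2^n) (mmul (2^n) (lift1 n 1 (pauli_of y)) \<rho>)))\<^sup>2 / 2 ^ count_list (rot_qubits gs) 1"
proof -
  define K where "K = {j. j < P \<and> rot_qubits gs ! j = 1}"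
  have "\<forall>j<P. \<sigma>!j \<noteq> 0 \<longleftrightarrow> j \<in> K" "K \<subseteq> {..<P}" "card K = count_list (rot_qubits gs) 1"
    using \<sigma> P unfolding pauli_path_def K_def by (auto simp: card_nth_eq_count_list)
  moreover have "\<sigma>!k \<noteq> 0" using \<sigma> P k unfolding pauli_path_def by simp
  ultimately have "(\<Prod>j<P. grad_factor_norm k j (\<sigma>!j)) = 4 / 2 ^ count_list (rot_qubits gs) 1"
    using prod_grad_factor_norm_le(2)[OF k(1)] prod_trig_norm_eq[of P \<sigma> K] by (simp add: power_one_over)
  moreover have "(path_coeff n gs \<rho> \<sigma>)\<^sup>2 = (Re (mtrace (2^n) (mmul (2^n) (lift1 n 1 (pauli_of y)) \<rho>)))\<^sup>2"
    using \<sigma> unfolding pauli_path_def by (blast intro: path_coeff_sq_eq)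
  ultimately show ?thesis by (simp add: power_divide)
qed

theorem expected_grad_sq_ge:
  assumes w: "well_formed n gs" and P: "P = length (rot_qubits gs)" and n1: "1 \<le> n"
    and reach: "reachable_paulis gs = UNIV" and L: "L = count_list (rot_qubits gs) 1"
  shows "real L / 2^L * alpha n \<rho> \<le> expect_params P (grad_sq P (objective n gs \<rho>))"
proof -
  define contrib where "contrib k \<sigma> = (path_coeff n gs \<rho> \<sigma> / 2)\<^sup>2 * (\<Prod>j<P. grad_factor_norm k j (\<sigma>!j))" for k \<sigma>
  define K where "K = {k. k < P \<and> rot_qubits gs ! k = 1}"
  obtain \<sigma>X \<sigma>Z where X: "pauli_path n gs \<sigma>X PX" and Z: "pauli_path n gs \<sigma>Z PZ"
    using reachable_pauli_path[OF w n1] reach by blast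
  have "\<sigma>X \<noteq> \<sigma>Z"
  proof
    assume "\<sigma>X = \<sigma>Z"
    have "signed_eq n (path_op n gs \<sigma>Z (lift1 n 1 pauliZ)) (lift1 n 1 pauliZ)"
      "signed_eq n (path_op n gs \<sigma>Z (lift1 n 1 pauliZ)) (lift1 n 1 pauliX)"
      using X Z \<open>\<sigma>X = \<sigma>Z\<close> by (simp_all add: pauli_path_def)
    then obtain s s' where "s = 1 \<or> s = -1"
      "path_op n gs \<sigma>Z (lift1 n 1 pauliZ) 0 0 = s * lift1 n 1 pauliZ 0 0"
      "path_op n gs \<sigma>Z (lift1 n 1 pauliZ) 0 0 = s' * lift1 n 1 pauliX 0 0"
      unfolding signed_eq_def by (metis zero_less_numeral zero_less_power)
    moreover have "lift1 n 1 pauliX 0 0 = 0" "lift1 n 1 pauliZ 0 0 = 1"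
      by (auto simp: lift1_def pauliX_def pauliZ_def qbit_def)
    ultimately show False by auto
  qed
  have nonneg: "0 \<le> contrib k \<sigma>" for k \<sigma>
    unfolding contrib_def
    by (intro mult_nonneg_nonneg prod_nonneg) (auto simp: grad_factor_norm_def trig_deriv_norm_def trig_norm_def)
  have "alpha n \<rho> / 2^L \<le> (\<Sum>\<sigma>\<in>paths P. contrib k \<sigma>)" if k: "k \<in> K" for k
  proof -
    have "\<sigma>X \<in> paths P" "\<sigma>Z \<in> paths P" using X Z P unfolding pauli_path_def by auto
    then have "(\<Sum>\<sigma>\<in>{\<sigma>X, \<sigma>Z}. contrib k \<sigma>) \<le> (\<Sum>\<sigma>\<in>paths P. contrib k \<sigma>)"
      using nonneg by (intro sum_mono2 finite_paths) auto
    then show ?thesis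
      using k \<open>\<sigma>X \<noteq> \<sigma>Z\<close> pauli_path_grad_contribution[OF X P] pauli_path_grad_contribution[OF Z P]
      unfolding contrib_def K_def alpha_def L by (simp add: add_divide_distrib)
  qed
  then have "(\<Sum>k\<in>K. alpha n \<rho> / 2^L) \<le> (\<Sum>k\<in>K. \<Sum>\<sigma>\<in>paths P. contrib k \<sigma>)"
    by (rule sum_mono)
  also have "\<dots> \<le> (\<Sum>k<P. \<Sum>\<sigma>\<in>paths P. contrib k \<sigma>)"
    using nonneg by (intro sum_mono2 sum_nonneg) (auto simp: K_def)
  also have "\<dots> = expect_params P (grad_sq P (objective n gs \<rho>))"
    unfolding expected_grad_sq_eq[OF w P] contrib_def ..
  finally show ?thesis
    using card_nth_eq_count_list[of "rot_qubits gs" 1] unfolding K_def P L by simp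
qed

section \<open>The two architectures\<close>

lemma rot_qubits_append: "rot_qubits (xs @ ys) = rot_qubits xs @ rot_qubits ys"
  by (induction xs rule: rot_qubits.induct) auto

lemma rot_qubits_concat: "rot_qubits (concat xss) = concat (map rot_qubits xss)"
  by (induction xss) (auto simp: rot_qubits_append)

lemma rot_qubits_map_Rot: "rot_qubits (map (\<lambda>j. Rot (f j)) xs) = map f xs"
  by (induction xs) auto

lemma rot_qubits_map_CX: "rot_qubits (map (\<lambda>j. CX (c j) (t j)) xs) = []"
  by (induction xs) auto

lemma well_formed_append: "well_formed n (xs @ ys) \<longleftrightarrow> well_formed n xs \<and> well_formed n ys"
  by (induction xs rule: rot_qubits.induct) auto

lemma well_formed_concat: "well_formed n (concat xss) \<longleftrightarrow> (\<forall>xs\<in>set xss. well_formed n xs)"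
  by (induction xss) (auto simp: well_formed_append)

lemma well_formed_map_Rot: "well_formed n (map (\<lambda>j. Rot (f j)) xs) \<longleftrightarrow> (\<forall>j\<in>set xs. f j \<in> {1..n})"
  by (induction xs) auto

lemma well_formed_map_CX:
  "well_formed n (map (\<lambda>j. CX (c j) (t j)) xs) \<longleftrightarrow>
     (\<forall>j\<in>set xs. c j \<in> {1..n} \<and> t j \<in> {1..n} \<and> c j \<noteq> t j \<and> c j \<noteq> 1)"
  by (induction xs) auto

lemma reachable_paulis_append: "reachable_paulis (xs @ ys) = foldr reach_step xs (reachable_paulis ys)"
  by (simp add: reachable_paulis_def)

lemma foldr_reach_step_Rot_other: "(\<forall>q\<in>set qs. q \<noteq> 1) \<Longrightarrow> foldr reach_step (map Rot qs) S = S"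
  by (induction qs) auto

lemma PX_in_foldr_reach_step_CX: "PX \<in> S \<Longrightarrow> PX \<in> foldr reach_step (map (\<lambda>j. CX (c j) (t j)) xs) S"
  by (induction xs) auto

lemma count_list_replicate_same: "count_list (replicate k x) x = k"
  by (induction k) auto

lemma count_list_map_Rot_qubit1:
  assumes "0 < d" "0 < K"
  shows "count_list (map (\<lambda>j. j * d + 1) [0..<K]) 1 = 1"
proof -
  have "inj (\<lambda>j. j * d + 1)" using assms(1) by (auto intro: injI)
  then have "count_list (map (\<lambda>j. j * d + 1) [0..<K]) ((\<lambda>j. j * d + 1) 0) = count_list [0..<K] 0"
    by (rule count_list_map_conv)
  also have "\<dots> = 1" using assms(2) by (simp add: upt_conv_Cons del: upt_Suc)
  finally show ?thesis by simp
qed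

definition tt_layer :: "nat \<Rightarrow> nat \<Rightarrow> gate list" where
  "tt_layer m l = map (\<lambda>j. Rot (j * 2^(l-1) + 1)) [0..<2^m div 2^(l-1)]
           @ (if l \<le> m then map (\<lambda>j. CX (j * 2^l + 2^(l-1) + 1) (j * 2^l + 1)) [0..<2^m div 2^l] else [])"

lemma tt_gates_eq: "tt_gates m = concat (map (tt_layer m) [1..<m+2])"
  unfolding tt_gates_def tt_layer_def Let_def by simp

lemma tt_layer_width: "1 \<le> l \<Longrightarrow> l \<le> m + 1 \<Longrightarrow> (2::nat)^m div 2^(l-1) = 2^(m+1-l)"
  using power_diff[of "2::nat" "l-1" m] by simp

lemma rot_qubits_tt_layer:
  "1 \<le> l \<Longrightarrow> l \<le> m + 1 \<Longrightarrow> rot_qubits (tt_layer m l) = map (\<lambda>j. j * 2^(l-1) + 1) [0..<2^(m+1-l)]"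
  unfolding tt_layer_def tt_layer_width[symmetric] by (simp add: rot_qubits_append rot_qubits_map_Rot rot_qubits_map_CX)

lemma tt_num_params: "length (rot_qubits (tt_gates m)) = 2 * 2^m - 1"
proof -
  have "length (rot_qubits (tt_gates m)) = (\<Sum>l\<leftarrow>[1..<m+2]. length (rot_qubits (tt_layer m l)))"
    unfolding tt_gates_eq rot_qubits_concat by (simp add: length_concat comp_def)
  also have "\<dots> = (\<Sum>l=1..<m+2. length (rot_qubits (tt_layer m l)))"
    by (simp only: sum_set_upt_conv_sum_list_nat[symmetric] set_upt)
  also have "\<dots> = (\<Sum>l=1..<m+2. 2^(m+1-l))"
    by (rule sum.cong) (auto simp: rot_qubits_tt_layer)
  also have "\<dots> = (\<Sum>i=0..<m+1. 2^i)"
    by (rule sum.reindex_bij_witness[of _ "\<lambda>i. m + 1 - i" "\<lambda>l. m + 1 - l"]) auto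
  finally show ?thesis by (simp add: sum_power2)
qed

lemma tt_count_qubit1: "count_list (rot_qubits (tt_gates m)) 1 = m + 1"
proof -
  have "count_list (rot_qubits (tt_gates m)) 1 = (\<Sum>l\<leftarrow>[1..<m+2]. count_list (rot_qubits (tt_layer m l)) 1)"
    unfolding tt_gates_eq rot_qubits_concat by (simp add: count_list_concat comp_def)
  also have "\<dots> = (\<Sum>l\<leftarrow>[1..<m+2]. 1)"
  proof (intro arg_cong[where f = sum_list] map_cong refl)
    fix l assume "l \<in> set [1..<m+2]"
    then have "1 \<le> l" "l \<le> m + 1" by auto
    then show "count_list (rot_qubits (tt_layer m l)) 1 = 1"
      unfolding rot_qubits_tt_layer[OF \<open>1 \<le> l\<close> \<open>l \<le> m + 1\<close>] by (intro count_list_map_Rot_qubit1) auto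
  qed
  finally show ?thesis by (simp add: sum_list_triv)
qed

lemma tt_well_formed: "well_formed (2^m) (tt_gates m)"
  unfolding tt_gates_eq well_formed_concat
proof (intro ballI)
  fix xs assume "xs \<in> set (map (tt_layer m) [1..<m+2])"
  then obtain l where l: "1 \<le> l" "l \<le> m + 1" and xs: "xs = tt_layer m l" by auto
  have rot: "j * 2^(l-1) + 1 \<in> {1..2^m}" if "j < 2^m div 2^(l-1)" for j :: nat
  proof -
    have "j < 2^(m + 1 - l)" using that tt_layer_width[OF l] by simp
    then have "j * 2^(l-1) < 2^(m + 1 - l) * 2^(l-1)" by simp
    also have "\<dots> = 2^m" using l by (simp add: power_add[symmetric])
    finally show ?thesis by simp
  qed
  have cx: "j * 2^l + 2^(l-1) + 1 \<in> {1..2^m} \<and> j * 2^l + 1 \<in> {1..2^m} \<and>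
      j * 2^l + 2^(l-1) + 1 \<noteq> j * 2^l + 1 \<and> j * 2^l + 2^(l-1) + 1 \<noteq> 1"
    if lm: "l \<le> m" and "j < 2^m div 2^l" for j :: nat
  proof -
    have "Suc j \<le> 2^(m - l)" using that power_diff[of "2::nat" l m] by simp
    then have "Suc j * 2^l \<le> 2^(m - l) * 2^l" by (rule mult_le_mono1)
    also have "\<dots> = 2^m" using lm by (simp add: power_add[symmetric])
    finally have "j * 2^l + 2^l \<le> 2^m" by simp
    moreover have "2^(l-1) + 1 \<le> (2::nat)^l"
      using l by (cases l) auto
    ultimately show ?thesis by auto
  qed
  show "well_formed (2^m) xs"
    unfolding xs tt_layer_def well_formed_append well_formed_map_Rot
    using rot cx by (auto simp: well_formed_map_CX)
qed

lemma tt_reachable_paulis: "reachable_paulis (tt_gates m) = UNIV"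
proof -
  have "reachable_paulis (concat (map (tt_layer m) [l..<m+2])) = UNIV" if "1 \<le> l" "l \<le> m + 1" for l
    using that(2,1)
  proof (induction l rule: inc_induct)
    case base
    have "tt_layer m (m+1) = [Rot 1]" unfolding tt_layer_def by simp
    then show ?case by (simp add: reachable_paulis_def)
  next
    case (step l)
    define K where "K = (2::nat)^m div 2^(l-1)"
    have "0 < K" unfolding K_def using tt_layer_width[of l m] step by simp
    then have rots: "[0..<K] = 0 # [1..<K]" by (simp add: upt_rec)
    define S where "S = foldr reach_step (if l \<le> m then map (\<lambda>j. CX (j * 2^l + 2^(l-1) + 1) (j * 2^l + 1)) [0..<2^m div 2^l] else []) UNIV"
    have "PX \<in> S" unfolding S_def by (auto intro: PX_in_foldr_reach_step_CX)
    have keep: "foldr reach_step (map (\<lambda>j. Rot (j * 2^(l-1) + 1)) [1..<K]) S = S"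
      using foldr_reach_step_Rot_other[of "map (\<lambda>j. j * 2^(l-1) + 1) [1..<K]" S] by (simp add: comp_def)
    have "[l..<m+2] = l # [Suc l..<m+2]" using step by (simp add: upt_rec)
    then have "reachable_paulis (concat (map (tt_layer m) [l..<m+2])) = foldr reach_step (tt_layer m l) UNIV"
      using step by (simp only: list.map concat.simps reachable_paulis_append)
    also have "\<dots> = reach_step (Rot 1) S"
      unfolding tt_layer_def K_def[symmetric] rots S_def[symmetric] using keep by (simp add: S_def)
    also have "\<dots> = UNIV" using \<open>PX \<in> S\<close> by auto
    finally show ?case .
  qed
  then show ?thesis unfolding tt_gates_eq by simp
qed

definition sc_layer :: "nat \<Rightarrow> nat \<Rightarrow> nat \<Rightarrow> gate list" where
  "sc_layer n nc l = [CX (n + 1 - l) (if l \<le> n - 1 - nc then n - l else 1), Rot (if l + 1 \<le> n - nc then n - l else 1)]"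

lemma sc_gates_eq: "sc_gates n nc = map (\<lambda>q. Rot q) [1..<n+1] @ concat (map (sc_layer n nc) [1..<n])"
  unfolding sc_gates_def sc_layer_def ..

lemma rot_qubits_sc_gates:
  "rot_qubits (sc_gates n nc) = [1..<n+1] @ map (\<lambda>l. if l + 1 \<le> n - nc then n - l else 1) [1..<n]"
  unfolding sc_gates_eq rot_qubits_append rot_qubits_concat rot_qubits_map_Rot
  by (simp add: sc_layer_def comp_def)

lemma sc_num_params: "2 \<le> n \<Longrightarrow> length (rot_qubits (sc_gates n nc)) = 2 * n - 1"
  unfolding rot_qubits_sc_gates by simp

lemma sc_count_qubit1:
  assumes n: "2 \<le> n" and nc: "1 \<le> nc" "nc \<le> n - 1"
  shows "count_list (rot_qubits (sc_gates n nc)) 1 = nc + 1"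
proof -
  have "count_list [1..<n+1] 1 = 1"
    using n by (simp add: upt_conv_Cons del: upt_Suc)
  moreover have "[1..<n] = [1..<n-nc] @ [n-nc..<n]"
    using nc n upt_add_eq_append[of 1 "n - nc" nc] by simp
  moreover have "count_list (map (\<lambda>l. if l + 1 \<le> n - nc then n - l else 1) [1..<n-nc]) 1 = 0"
    using nc by (auto simp: count_list_0_iff)
  moreover have "map (\<lambda>l. if l + 1 \<le> n - nc then n - l else 1) [n-nc..<n] = replicate nc 1"
    using nc n by (auto intro: replicate_eqI)
  ultimately show ?thesis unfolding rot_qubits_sc_gates by (simp add: count_list_replicate_same)
qed

lemma sc_well_formed:
  assumes "2 \<le> n" "1 \<le> nc" "nc \<le> n - 1"
  shows "well_formed n (sc_gates n nc)"
  using assms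
  unfolding sc_gates_eq well_formed_append well_formed_concat well_formed_map_Rot
  by (auto simp: sc_layer_def)

lemma sc_reachable_paulis:
  assumes n: "2 \<le> n" and nc: "1 \<le> nc" "nc \<le> n - 1"
  shows "reachable_paulis (sc_gates n nc) = UNIV"
proof -
  have nonempty: "foldr reach_step (concat (map (sc_layer n nc) ls)) {PZ} \<noteq> {}"
    if "\<forall>l\<in>set ls. 1 \<le> l \<and> l < n" for ls
    using that
  proof (induction ls)
    case (Cons l ls)
    then show ?case using nc by (auto simp: sc_layer_def)
  qed simp
  have "[1..<n+1] = 1 # [Suc 1..<n+1]" using n by (intro upt_conv_Cons) simp
  then have "reachable_paulis (sc_gates n nc)
      = reach_step (Rot 1) (foldr reach_step (map Rot [Suc 1..<n+1]) (reachable_paulis (concat (map (sc_layer n nc) [1..<n]))))"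
    unfolding sc_gates_eq reachable_paulis_append by simp
  also have "\<dots> = reach_step (Rot 1) (reachable_paulis (concat (map (sc_layer n nc) [1..<n])))"
    by (subst foldr_reach_step_Rot_other) auto
  also have "\<dots> = UNIV"
    using nonempty[of "[1..<n]"] by (simp add: reachable_paulis_def)
  finally show ?thesis .
qed

theorem theorem2:
  fixes n :: nat and \<rho> :: cmat
  assumes n2: "n \<ge> 2"
    and dens: "density_matrix n \<rho>"
  shows "(\<forall>m. n = 2^m \<longrightarrow>
            (1 + log 2 n) / (2 * n) * alpha n \<rho> \<le> expect_params (2*n - 1) (grad_sq (2*n - 1) (f_TT m \<rho>))
          \<and> expect_params (2*n - 1) (grad_sq (2*n - 1) (f_TT m \<rho>)) \<le> 2 * n - 1)
       \<and> (\<forall>nc. 1 \<le> nc \<and> nc \<le> n - 1 \<longrightarrow>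
            (1 + nc) / 2^(1 + nc) * alpha n \<rho> \<le> expect_params (2*n - 1) (grad_sq (2*n - 1) (f_SC n nc \<rho>))
          \<and> expect_params (2*n - 1) (grad_sq (2*n - 1) (f_SC n nc \<rho>)) \<le> 2 * n - 1)"
proof (intro conjI allI impI)
  have n1: "1 \<le> n" using n2 by simp
  fix m assume n: "n = 2^m"
  have tt: "well_formed n (tt_gates m)" "2 * n - 1 = length (rot_qubits (tt_gates m))"
    "reachable_paulis (tt_gates m) = UNIV" "m + 1 = count_list (rot_qubits (tt_gates m)) 1"
    using tt_well_formed tt_num_params tt_reachable_paulis tt_count_qubit1 n by auto
  have "(1 + log 2 n) / (2 * n) = real (m + 1) / 2^(m + 1)"
    using n by (simp add: log_nat_power)
  then show "(1 + log 2 n) / (2 * n) * alpha n \<rho> \<le> expect_params (2*n - 1) (grad_sq (2*n - 1) (f_TT m \<rho>))"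
    using expected_grad_sq_ge[OF tt(1,2) n1 tt(3,4)] unfolding f_TT_def n[symmetric] by simp
  show "expect_params (2*n - 1) (grad_sq (2*n - 1) (f_TT m \<rho>)) \<le> 2 * n - 1"
    using expected_grad_sq_le_num_params[OF tt(1,2) n1 dens] unfolding f_TT_def n[symmetric] .
next
  have n1: "1 \<le> n" using n2 by simp
  fix nc assume nc: "1 \<le> nc \<and> nc \<le> n - 1"
  have sc: "well_formed n (sc_gates n nc)" "2 * n - 1 = length (rot_qubits (sc_gates n nc))"
    "reachable_paulis (sc_gates n nc) = UNIV" "1 + nc = count_list (rot_qubits (sc_gates n nc)) 1"
    using sc_well_formed sc_num_params sc_reachable_paulis sc_count_qubit1 n2 nc by auto
  show "(1 + real nc) / 2^(1 + nc) * alpha n \<rho> \<le> expect_params (2*n - 1) (grad_sq (2*n - 1) (f_SC n nc \<rho>))"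
    using expected_grad_sq_ge[OF sc(1,2) n1 sc(3,4)] unfolding f_SC_def by simp
  show "expect_params (2*n - 1) (grad_sq (2*n - 1) (f_SC n nc \<rho>)) \<le> 2 * n - 1"
    using expected_grad_sq_le_num_params[OF sc(1,2) n1 dens] unfolding f_SC_def .
qed

end
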